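(* Let $\mathfrak g$ be of type $A_2$, $\lambda,\mu\in P^+$, and let $\mathbf s\in\mathbb Z_+^3$ with $\mathbf s\notin\mathcal S^{A}_{\lambda,\mu}$. Then there exist finitely many $\mathbf s'\in\mathbb Z_+^3$ with $\mathbf s'\prec\mathbf s$ and elements $c_{\mathbf s'}\in\mathbf U(\mathfrak n^-\otimes1)$ such that in $\mathcal F_{\lambda,\mu}$ $$\Big(X_{\mathbf s}+\sum_{\mathbf s'\prec\mathbf s}c_{\mathbf s'}X_{\mathbf s'}\Big)v=0.$$
   Context: $\mathfrak g$ is the simple Lie algebra of type $A_2$ with Cartan subalgebra $\mathfrak h$, simple roots $\alpha_1,\alpha_2$, coroots $h_1,h_2$, positive roots $R^+$ written $(r_1,r_2)$ for $r_1\alpha_1+r_2\alpha_2$ (namely $(1,0),(0,1),(1,1)$), coroots $h_\alpha$, Chevalley basis $\{x^\pm_\alpha,h_i\}$, $\mathfrak n^\pm=\mathrm{span}\{x^\pm_\alpha\}$, dominant weights $P^+$; $m_i=\lambda(h_i)$, $n_i=\mu(h_i)$; $x^{(s)}=x^s/s!$. $\mathcal F_{\lambda,\mu}$ is the cyclic $\mathbf U(\mathfrak g\otimes\mathbb C[t])$-module generated by $v\ne0$ with relations $(\mathfrak n^+\otimes\mathbb C[t])v=0$; $(h\otimes t^r)v=\delta_{r,0}(\lambda+\mu)(h)v$ ($h\in\mathfrak h$); and for $\alpha\in R^+$: $(x^-_\alpha\otimes1)^{(\lambda+\mu)(h_\alpha)+1}v=0$, $(x^-_\alpha\otimes t)^{\min\{\lambda(h_\alpha),\mu(h_\alpha)\}+1}v=0$,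 $(x^-_\alpha\otimes t^r)v=0$ for $r\ge2$. $X_{(a,b,c)}=(x^-_{(1,0)}\otimes t)^{(a)}(x^-_{(1,1)}\otimes t)^{(b)}(x^-_{(0,1)}\otimes t)^{(c)}$. $\mathcal S^{A}_{\lambda,\mu}=\{(a,b,c)\in\mathbb Z_+^3: a\le\min\{m_1,n_1\},\ c\le\min\{m_2,n_2\},\ a+b+c\le\min\{m_1+m_2,n_1+n_2\},\ 2a+b\le m_1+n_1,\ 2c+b\le m_2+n_2\}$. Total order on $\mathbb Z_+^3$: $(a,b,c)\succ(a',b',c')$ iff $c<c'$, or $c=c'$ and $a<a'$, or $c=c'$, $a=a'$ and $b<b'$. *)

theory Defs
  imports "HOL-Analysis.Analysis"
begin

type_synonym mat3 = "complex^3^3"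

definition Emat :: "3 \<Rightarrow> 3 \<Rightarrow> mat3" where
  "Emat i j = (\<chi> k l. if k = i \<and> l = j then 1 else 0)"

definition lie_br :: "mat3 \<Rightarrow> mat3 \<Rightarrow> mat3" where
  "lie_br A B = A ** B - B ** A"

datatype proot = R10 | R01 | R11

fun xplus :: "proot \<Rightarrow> mat3" where
  "xplus R10 = Emat 1 2" | "xplus R01 = Emat 2 3" | "xplus R11 = Emat 1 3"
fun xminus :: "proot \<Rightarrow> mat3" where
  "xminus R10 = Emat 2 1" | "xminus R01 = Emat 3 2" | "xminus R11 = Emat 3 1"

definition h1 :: mat3 where "h1 = Emat 1 1 - Emat 2 2"
definition h2 :: mat3 where "h2 = Emat 2 2 - Emat 3 3"

text \<open>A dominant weight lambda is given by (m1,m2) = (lambda(h1), lambda(h2));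
  value lambda(h_alpha) on the coroot of a positive root.\<close>
fun wt_on :: "nat \<times> nat \<Rightarrow> proot \<Rightarrow> nat" where
  "wt_on (m1, m2) R10 = m1" | "wt_on (m1, m2) R01 = m2" | "wt_on (m1, m2) R11 = m1 + m2"

section \<open>Free associative algebra over C on letters (A, r) = A \<otimes> t^r\<close>

type_synonym letter = "mat3 \<times> nat"
type_synonym ncpoly = "letter list \<Rightarrow> complex"

definition finsupp :: "ncpoly \<Rightarrow> bool" where
  "finsupp p \<longleftrightarrow> finite {w. p w \<noteq> 0}"

definition ncmul :: "ncpoly \<Rightarrow> ncpoly \<Rightarrow> ncpoly" where
  "ncmul p q w = (\<Sum>i\<le>length w. p (take i w) * q (drop i w))"

definition ncword :: "letter list \<Rightarrow> ncpoly" where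
  "ncword u = (\<lambda>w. if w = u then 1 else 0)"

definition ncscale :: "complex \<Rightarrow> ncpoly \<Rightarrow> ncpoly" where
  "ncscale c p = (\<lambda>w. c * p w)"

definition ncadd :: "ncpoly \<Rightarrow> ncpoly \<Rightarrow> ncpoly" where
  "ncadd p q = (\<lambda>w. p w + q w)"

definition ncsub :: "ncpoly \<Rightarrow> ncpoly \<Rightarrow> ncpoly" where
  "ncsub p q = (\<lambda>w. p w - q w)"

text \<open>Defining relations of U(gl3 \<otimes> C[t]) (linearity in the matrix, bracket relation),
  together with the relations (I \<otimes> t^r) = 0 which cut gl3 \<otimes> C[t] down to
  sl3 \<otimes> C[t]; the quotient of the free algebra by these is U(sl3 \<otimes> C[t]).\<close>
inductive_set env_rels :: "ncpoly set" where
  lin_add: "ncsub (ncword [(A + B, r)]) (ncadd (ncword [(A, r)]) (ncword [(B, r)])) \<in> env_rels"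
| lin_scale: "ncsub (ncword [(c *\<^sub>R A, r)]) (ncscale (complex_of_real c) (ncword [(A, r)])) \<in> env_rels"
| lin_cscale: "ncsub (ncword [((\<chi> i j. c * A $ i $ j), r)]) (ncscale c (ncword [(A, r)])) \<in> env_rels"
| center: "ncword [(mat 1, r)] \<in> env_rels"
| bracket: "ncsub (ncsub (ncword [(A, r), (B, s)]) (ncword [(B, s), (A, r)]))
              (ncword [(lie_br A B, r + s)]) \<in> env_rels"

text \<open>Defining relations of the cyclic module F_{lambda,mu} (as elements y with y v = 0).
  The divided powers are replaced by ordinary powers (they differ by a nonzero scalar).\<close>
inductive_set F_rels :: "nat \<times> nat \<Rightarrow> nat \<times> nat \<Rightarrow> ncpoly set" for lam mu where
  nplus: "ncword [(xplus \<alpha>, r)] \<in> F_rels lam mu"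
| cartan1: "ncsub (ncword [(h1, r)])
             (ncscale (if r = 0 then of_nat (fst lam + fst mu) else 0) (ncword [])) \<in> F_rels lam mu"
| cartan2: "ncsub (ncword [(h2, r)])
             (ncscale (if r = 0 then of_nat (snd lam + snd mu) else 0) (ncword [])) \<in> F_rels lam mu"
| pow0: "ncword (replicate (wt_on lam \<alpha> + wt_on mu \<alpha> + 1) (xminus \<alpha>, 0)) \<in> F_rels lam mu"
| pow1: "ncword (replicate (min (wt_on lam \<alpha>) (wt_on mu \<alpha>) + 1) (xminus \<alpha>, 1)) \<in> F_rels lam mu"
| high: "r \<ge> 2 \<Longrightarrow> ncword [(xminus \<alpha>, r)] \<in> F_rels lam mu"

text \<open>Annihilator of v in F_{lambda,mu}, pulled back to the free algebra:
  the left ideal generated by F_rels plus the two-sided ideal generated by env_rels.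
  An element y of the free algebra satisfies y v = 0 in F_{lambda,mu} iff y \<in> ann_F.\<close>
inductive_set ann_F :: "nat \<times> nat \<Rightarrow> nat \<times> nat \<Rightarrow> ncpoly set" for lam mu where
  gen: "y \<in> F_rels lam mu \<Longrightarrow> y \<in> ann_F lam mu"
| env: "y \<in> env_rels \<Longrightarrow> finsupp a \<Longrightarrow> finsupp b \<Longrightarrow> ncmul (ncmul a y) b \<in> ann_F lam mu"
| zero: "(\<lambda>w. 0) \<in> ann_F lam mu"
| add: "x \<in> ann_F lam mu \<Longrightarrow> y \<in> ann_F lam mu \<Longrightarrow> ncadd x y \<in> ann_F lam mu"
| lmul: "x \<in> ann_F lam mu \<Longrightarrow> finsupp p \<Longrightarrow> ncmul p x \<in> ann_F lam mu"

text \<open>(Representatives of) elements of U(n^- \<otimes> 1): finitely supported polynomials in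
  the letters x^-_alpha \<otimes> 1.\<close>
definition in_Unminus :: "ncpoly \<Rightarrow> bool" where
  "in_Unminus p \<longleftrightarrow> finsupp p \<and>
     (\<forall>w. p w \<noteq> 0 \<longrightarrow> set w \<subseteq> {(xminus R10, 0), (xminus R11, 0), (xminus R01, 0)})"

definition Xs :: "nat \<times> nat \<times> nat \<Rightarrow> ncpoly" where
  "Xs s = (case s of (a, b, c) \<Rightarrow>
     ncscale (1 / of_nat (fact a * fact b * fact c))
       (ncword (replicate a (xminus R10, 1) @ replicate b (xminus R11, 1) @ replicate c (xminus R01, 1))))"

definition S_A :: "nat \<times> nat \<Rightarrow> nat \<times> nat \<Rightarrow> (nat \<times> nat \<times> nat) set" where
  "S_A lam mu = (case lam of (m1, m2) \<Rightarrow> case mu of (n1, n2) \<Rightarrow>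
     {(a, b, c). a \<le> min m1 n1 \<and> c \<le> min m2 n2 \<and> a + b + c \<le> min (m1 + m2) (n1 + n2)
        \<and> 2 * a + b \<le> m1 + n1 \<and> 2 * c + b \<le> m2 + n2})"

text \<open>succ_ord s s' means s \<succ> s' (equivalently s' \<prec> s).\<close>
definition succ_ord :: "nat \<times> nat \<times> nat \<Rightarrow> nat \<times> nat \<times> nat \<Rightarrow> bool" where
  "succ_ord s s' = (case s of (a, b, c) \<Rightarrow> case s' of (a', b', c') \<Rightarrow>
     c < c' \<or> (c = c' \<and> a < a') \<or> (c = c' \<and> a = a' \<and> b < b'))"

end

theory Submission
  imports Defs
begin

text \<open>
  Work in \<open>U = U(sl\<^sub>3 \<otimes> \<complex>[t])\<close> modulo the left ideal \<open>Ann v\<close>, with \<open>G = x\<^sup>-\<^sub>1\<^sub>0 \<otimes> t\<close>,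
  \<open>Z = x\<^sup>-\<^sub>1\<^sub>1 \<otimes> t\<close>, \<open>Y = x\<^sup>-\<^sub>0\<^sub>1 \<otimes> t\<close>, so that \<open>X\<^sub>(\<^sub>a\<^sub>,\<^sub>b\<^sub>,\<^sub>c\<^sub>)\<close> is a nonzero multiple of
  \<open>G\<^sup>a Z\<^sup>b Y\<^sup>c\<close>. It suffices to find a relation \<open>k G\<^sup>a Z\<^sup>b Y\<^sup>c v = \<Sum> u\<^sub>s\<^sub>' X\<^sub>s\<^sub>' v\<close> with
  \<open>k \<noteq> 0\<close>, \<open>u\<^sub>s\<^sub>' \<in> U(n\<^sup>- \<otimes> 1)\<close> and \<open>s' \<prec> s\<close>; each violated inequality of
  \<open>S\<^sup>A\<^sub>\<lambda>\<^sub>,\<^sub>\<mu>\<close> gives such a relation.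

  If \<open>a > min m\<^sub>1 n\<^sub>1\<close> or \<open>c > min m\<^sub>2 n\<^sub>2\<close>, the relation on \<open>(x\<^sup>-\<^sub>\<alpha> \<otimes> t)\<close>-powers kills
  \<open>G\<^sup>a Z\<^sup>b Y\<^sup>c v\<close> outright, since reordering only produces \<open>x\<^sup>-\<^sub>1\<^sub>1 \<otimes> t\<^sup>2\<close>, which kills \<open>v\<close>.
  If \<open>a + b + c\<close> is too large, \<open>Z\<^sup>a\<^sup>+\<^sup>b\<^sup>+\<^sup>c v = 0\<close>, and the raising operators
  \<open>x\<^sup>+\<^sub>1\<^sub>0 \<otimes> 1\<close>, \<open>x\<^sup>+\<^sub>0\<^sub>1 \<otimes> 1\<close> convert \<open>c\<close> resp. \<open>a\<close> of the \<open>Z\<close>'s into \<open>Y\<close>'s and \<open>G\<close>'s.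
  If \<open>2a + b > m\<^sub>1 + n\<^sub>1\<close>, the \<open>sl\<^sub>2\<close> loop relation gives \<open>(x\<^sup>-\<^sub>1\<^sub>0 \<otimes> 1)\<^sup>b G\<^sup>a v = 0\<close>;
  multiplying by \<open>Y\<^sup>b\<^sup>+\<^sup>c\<close> and commuting the degree-zero factors to the left, where they
  lie in \<open>U(n\<^sup>- \<otimes> 1)\<close>, gives \<open>G\<^sup>a Z\<^sup>b Y\<^sup>c v\<close> (each factor absorbed into a \<open>Z\<close>) plus
  terms with fewer \<open>Z\<close>'s and more \<open>Y\<close>'s, which are lower in \<open>\<prec>\<close>. The case \<open>2c + b > m\<^sub>2 + n\<^sub>2\<close> is symmetric.
\<close>

declare xminus.simps [simp del] xplus.simps [simp del]

section \<open>The free algebra\<close>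

lemma ncmul_Nil: "ncmul p q [] = p [] * q []"
  by (simp add: ncmul_def)

lemma ncmul_Cons: "ncmul p q (x # w) = p [] * q (x # w) + ncmul (\<lambda>u. p (x # u)) q w"
  unfolding ncmul_def by (simp add: sum.atMost_Suc_shift del: sum.atMost_Suc)

lemma ncmul_add_left: "ncmul (ncadd p p') q = ncadd (ncmul p q) (ncmul p' q)"
  by (simp add: fun_eq_iff ncmul_def ncadd_def sum.distrib algebra_simps)

lemma ncmul_add_right: "ncmul p (ncadd q q') = ncadd (ncmul p q) (ncmul p q')"
  by (simp add: fun_eq_iff ncmul_def ncadd_def sum.distrib algebra_simps)

lemma ncmul_diff_left: "ncmul (ncsub p p') q = ncsub (ncmul p q) (ncmul p' q)"
  by (simp add: fun_eq_iff ncmul_def ncsub_def sum_subtractf algebra_simps)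

lemma ncmul_diff_right: "ncmul p (ncsub q q') = ncsub (ncmul p q) (ncmul p q')"
  by (simp add: fun_eq_iff ncmul_def ncsub_def sum_subtractf algebra_simps)

lemma ncmul_scale_left: "ncmul (ncscale c p) q = ncscale c (ncmul p q)"
  by (simp add: fun_eq_iff ncmul_def ncscale_def sum_distrib_left algebra_simps)

lemma ncmul_scale_right: "ncmul p (ncscale c q) = ncscale c (ncmul p q)"
  by (simp add: fun_eq_iff ncmul_def ncscale_def sum_distrib_left algebra_simps)

lemma ncmul_zero_left: "ncmul (\<lambda>_. 0) q = (\<lambda>_. 0)"
  by (simp add: fun_eq_iff ncmul_def)

lemma ncmul_zero_right: "ncmul p (\<lambda>_. 0) = (\<lambda>_. 0)"
  by (simp add: fun_eq_iff ncmul_def)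

lemma ncmul_assoc: "ncmul (ncmul p q) r = ncmul p (ncmul q r)"
proof (rule ext)
  show "ncmul (ncmul p q) r w = ncmul p (ncmul q r) w" for w
  proof (induction w arbitrary: p)
    case Nil
    show ?case by (simp add: ncmul_Nil)
  next
    case (Cons x w)
    have tail: "(\<lambda>u. ncmul p q (x # u)) = ncadd (ncscale (p []) (\<lambda>u. q (x # u))) (ncmul (\<lambda>u. p (x # u)) q)"
      by (simp add: fun_eq_iff ncmul_Cons ncadd_def ncscale_def)
    have "ncmul (ncmul p q) r (x # w)
        = p [] * q [] * r (x # w) + p [] * ncmul (\<lambda>u. q (x # u)) r w
          + ncmul (ncmul (\<lambda>u. p (x # u)) q) r w"
      by (subst ncmul_Cons, simp only: ncmul_Nil tail ncmul_add_left ncmul_scale_left)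
        (simp add: ncadd_def ncscale_def)
    also have "\<dots> = ncmul p (ncmul q r) (x # w)"
      by (simp add: Cons.IH ncmul_Cons ncmul_Nil algebra_simps)
    finally show ?case .
  qed
qed

lemma ncmul_one_left: "ncmul (ncword []) q = q"
proof (rule ext)
  show "ncmul (ncword []) q w = q w" for w
    by (cases w) (simp_all add: ncmul_Nil ncmul_Cons ncword_def ncmul_zero_left)
qed

lemma ncmul_one_right: "ncmul q (ncword []) = q"
proof (rule ext)
  show "ncmul q (ncword []) w = q w" for w
    by (induction w arbitrary: q) (simp_all add: ncmul_Nil ncmul_Cons ncword_def)
qed

lemma ncword_Cons: "ncword (x # w) = ncmul (ncword [x]) (ncword w)"
proof (rule ext)
  fix u
  have shift: "(\<lambda>u'. ncword [x] (y # u')) = (if y = x then ncword [] else (\<lambda>_. 0))" for y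
    by (auto simp: ncword_def)
  show "ncword (x # w) u = ncmul (ncword [x]) (ncword w) u"
    by (cases u) (auto simp: ncmul_Nil ncmul_Cons shift ncmul_one_left ncmul_zero_left,
        auto simp: ncword_def)
qed

lemma ncmul_nonzero_split: "ncmul p q w \<noteq> 0 \<Longrightarrow> \<exists>i. p (take i w) \<noteq> 0 \<and> q (drop i w) \<noteq> 0"
  unfolding ncmul_def by (metis (no_types, lifting) mult_not_zero sum.neutral)

lemma finsupp_zero: "finsupp (\<lambda>_. 0)"
  by (simp add: finsupp_def)

lemma finsupp_ncword: "finsupp (ncword u)"
  by (simp add: finsupp_def ncword_def)

lemma finsupp_ncscale: "finsupp p \<Longrightarrow> finsupp (ncscale c p)"
  unfolding finsupp_def ncscale_def by (rule finite_subset[rotated]) auto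

lemma finsupp_ncadd: "finsupp p \<Longrightarrow> finsupp q \<Longrightarrow> finsupp (ncadd p q)"
  unfolding finsupp_def ncadd_def
  by (rule finite_subset[of _ "{w. p w \<noteq> 0} \<union> {w. q w \<noteq> 0}"]) auto

lemma finsupp_ncsub: "finsupp p \<Longrightarrow> finsupp q \<Longrightarrow> finsupp (ncsub p q)"
  unfolding finsupp_def ncsub_def
  by (rule finite_subset[of _ "{w. p w \<noteq> 0} \<union> {w. q w \<noteq> 0}"]) auto

lemma finsupp_ncmul:
  assumes "finsupp p" "finsupp q"
  shows "finsupp (ncmul p q)"
proof -
  have "{w. ncmul p q w \<noteq> 0} \<subseteq> (\<lambda>(u, v). u @ v) ` ({w. p w \<noteq> 0} \<times> {w. q w \<noteq> 0})"
  proof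
    fix w assume "w \<in> {w. ncmul p q w \<noteq> 0}"
    then obtain i where "p (take i w) \<noteq> 0" "q (drop i w) \<noteq> 0"
      using ncmul_nonzero_split by blast
    then show "w \<in> (\<lambda>(u, v). u @ v) ` ({w. p w \<noteq> 0} \<times> {w. q w \<noteq> 0})"
      by (intro image_eqI[where x="(take i w, drop i w)"]) auto
  qed
  with assms show ?thesis
    unfolding finsupp_def by (meson finite_SigmaI finite_imageI finite_subset)
qed

section \<open>The enveloping algebra as a quotient\<close>

inductive_set env_ideal :: "ncpoly set" where
  gen: "y \<in> env_rels \<Longrightarrow> finsupp a \<Longrightarrow> finsupp b \<Longrightarrow> ncmul (ncmul a y) b \<in> env_ideal"
| zero: "(\<lambda>_. 0) \<in> env_ideal"
| add: "x \<in> env_ideal \<Longrightarrow> y \<in> env_ideal \<Longrightarrow> ncadd x y \<in> env_ideal"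

lemma env_ideal_scale: "x \<in> env_ideal \<Longrightarrow> ncscale c x \<in> env_ideal"
proof (induction rule: env_ideal.induct)
  case (gen y a b)
  then show ?case
    by (metis env_ideal.gen finsupp_ncscale ncmul_scale_left)
next
  case zero
  then show ?case by (simp add: ncscale_def env_ideal.zero)
next
  case (add x y)
  have "ncscale c (ncadd x y) = ncadd (ncscale c x) (ncscale c y)"
    by (simp add: fun_eq_iff ncscale_def ncadd_def algebra_simps)
  with add show ?case by (simp add: env_ideal.add)
qed

lemma env_ideal_mult_left: "x \<in> env_ideal \<Longrightarrow> finsupp p \<Longrightarrow> ncmul p x \<in> env_ideal"
  by (induction rule: env_ideal.induct)
    (simp_all add: ncmul_assoc[symmetric] env_ideal.intros finsupp_ncmul ncmul_zero_right
      ncmul_add_right)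

lemma env_ideal_mult_right: "x \<in> env_ideal \<Longrightarrow> finsupp p \<Longrightarrow> ncmul x p \<in> env_ideal"
proof (induction rule: env_ideal.induct)
  case (gen y a b)
  have "ncmul (ncmul (ncmul a y) b) p = ncmul (ncmul a y) (ncmul b p)"
    by (rule ncmul_assoc)
  with gen show ?case by (simp add: env_ideal.gen finsupp_ncmul)
qed (simp_all add: env_ideal.intros ncmul_zero_left ncmul_add_left)

lemma env_rels_in_env_ideal: "y \<in> env_rels \<Longrightarrow> y \<in> env_ideal"
  using env_ideal.gen[OF _ finsupp_ncword finsupp_ncword, of y "[]" "[]"]
  by (simp add: ncmul_one_left ncmul_one_right)

lemma env_ideal_in_ann_F: "x \<in> env_ideal \<Longrightarrow> x \<in> ann_F lam mu"
  by (induction rule: env_ideal.induct) (auto intro: ann_F.intros)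

lemma ann_F_scale: "x \<in> ann_F lam mu \<Longrightarrow> ncscale c x \<in> ann_F lam mu"
  using ann_F.lmul[of x lam mu "ncscale c (ncword [])"]
  by (simp add: ncmul_scale_left ncmul_one_left finsupp_ncscale finsupp_ncword)

definition env_equiv :: "ncpoly \<Rightarrow> ncpoly \<Rightarrow> bool" where
  "env_equiv p q \<longleftrightarrow> finsupp p \<and> finsupp q \<and> ncsub p q \<in> env_ideal"

lemma env_equiv_refl: "finsupp p \<Longrightarrow> env_equiv p p"
  unfolding env_equiv_def ncsub_def by (simp add: env_ideal.zero)

lemma env_equiv_eqI: "finsupp p \<Longrightarrow> p = q \<Longrightarrow> env_equiv p q"
  using env_equiv_refl by simp

lemma part_equivp_env_equiv: "part_equivp env_equiv"
proof (rule part_equivpI)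
  show "\<exists>x. env_equiv x x"
    using env_equiv_refl finsupp_zero by blast
  show "symp env_equiv"
  proof (rule sympI)
    fix p q assume "env_equiv p q"
    moreover have "ncsub q p = ncscale (-1) (ncsub p q)"
      by (simp add: fun_eq_iff ncsub_def ncscale_def)
    ultimately show "env_equiv q p"
      unfolding env_equiv_def by (simp add: env_ideal_scale)
  qed
  show "transp env_equiv"
  proof (rule transpI)
    fix p q r assume "env_equiv p q" "env_equiv q r"
    moreover have "ncsub p r = ncadd (ncsub p q) (ncsub q r)"
      by (simp add: fun_eq_iff ncadd_def ncsub_def)
    ultimately show "env_equiv p r"
      unfolding env_equiv_def by (simp add: env_ideal.add)
  qed
qed

text \<open>The type \<open>U\<close> models \<open>U(sl\<^sub>3 \<otimes> \<complex>[t])\<close>: finitely supported elements of the free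
  algebra modulo the two-sided ideal of the defining relations.\<close>

quotient_type U = ncpoly / partial: env_equiv
  by (rule part_equivp_env_equiv)

instantiation U :: "{ring, monoid_mult}"
begin

lift_definition zero_U :: U is "\<lambda>_. 0"
  by (rule env_equiv_refl[OF finsupp_zero])

lift_definition one_U :: U is "ncword []"
  by (rule env_equiv_refl[OF finsupp_ncword])

lift_definition plus_U :: "U \<Rightarrow> U \<Rightarrow> U" is ncadd
proof -
  fix p p' q q' assume "env_equiv p p'" "env_equiv q q'"
  moreover have "ncsub (ncadd p q) (ncadd p' q') = ncadd (ncsub p p') (ncsub q q')"
    by (simp add: fun_eq_iff ncadd_def ncsub_def)
  ultimately show "env_equiv (ncadd p q) (ncadd p' q')"
    unfolding env_equiv_def by (simp add: finsupp_ncadd env_ideal.add)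
qed

lift_definition uminus_U :: "U \<Rightarrow> U" is "ncscale (-1)"
proof -
  fix p p' assume "env_equiv p p'"
  moreover have "ncsub (ncscale (-1) p) (ncscale (-1) p') = ncscale (-1) (ncsub p p')"
    by (simp add: fun_eq_iff ncsub_def ncscale_def)
  ultimately show "env_equiv (ncscale (-1) p) (ncscale (-1) p')"
    unfolding env_equiv_def by (simp add: finsupp_ncscale env_ideal_scale)
qed

lift_definition minus_U :: "U \<Rightarrow> U \<Rightarrow> U" is ncsub
proof -
  fix p p' q q' assume "env_equiv p p'" "env_equiv q q'"
  moreover have "ncsub (ncsub p q) (ncsub p' q') = ncadd (ncsub p p') (ncscale (-1) (ncsub q q'))"
    by (simp add: fun_eq_iff ncadd_def ncsub_def ncscale_def)
  ultimately show "env_equiv (ncsub p q) (ncsub p' q')"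
    unfolding env_equiv_def by (simp add: finsupp_ncsub env_ideal.add env_ideal_scale)
qed

lift_definition times_U :: "U \<Rightarrow> U \<Rightarrow> U" is ncmul
proof -
  fix p p' q q' assume equiv: "env_equiv p p'" "env_equiv q q'"
  have "ncsub (ncmul p q) (ncmul p' q') = ncadd (ncmul (ncsub p p') q) (ncmul p' (ncsub q q'))"
    by (simp only: ncmul_diff_left ncmul_diff_right) (simp add: fun_eq_iff ncadd_def ncsub_def)
  with equiv show "env_equiv (ncmul p q) (ncmul p' q')"
    unfolding env_equiv_def
    by (simp add: finsupp_ncmul env_ideal.add env_ideal_mult_left env_ideal_mult_right)
qed

instance
proof
  fix a b c :: U
  show "a + b + c = a + (b + c)"
    by transfer (intro env_equiv_eqI finsupp_ncadd; simp add: env_equiv_def fun_eq_iff ncadd_def)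
  show "a + b = b + a"
    by transfer (intro env_equiv_eqI finsupp_ncadd; simp add: env_equiv_def fun_eq_iff ncadd_def)
  show "0 + a = a"
    by transfer (intro env_equiv_eqI finsupp_ncadd finsupp_zero;
        simp add: env_equiv_def fun_eq_iff ncadd_def)
  show "- a + a = 0"
    by transfer (intro env_equiv_eqI finsupp_ncadd finsupp_ncscale;
        simp add: env_equiv_def fun_eq_iff ncadd_def ncscale_def)
  show "a - b = a + - b"
    by transfer (intro env_equiv_eqI finsupp_ncsub;
        simp add: env_equiv_def fun_eq_iff ncadd_def ncsub_def ncscale_def)
  show "a * b * c = a * (b * c)"
    by transfer (intro env_equiv_eqI finsupp_ncmul; simp add: env_equiv_def ncmul_assoc)
  show "(a + b) * c = a * c + b * c"
    by transfer (intro env_equiv_eqI finsupp_ncmul finsupp_ncadd;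
        simp add: env_equiv_def ncmul_add_left)
  show "a * (b + c) = a * b + a * c"
    by transfer (intro env_equiv_eqI finsupp_ncmul finsupp_ncadd;
        simp add: env_equiv_def ncmul_add_right)
  show "1 * a = a"
    by transfer (intro env_equiv_eqI finsupp_ncmul finsupp_ncword;
        simp add: env_equiv_def ncmul_one_left)
  show "a * 1 = a"
    by transfer (intro env_equiv_eqI finsupp_ncmul finsupp_ncword;
        simp add: env_equiv_def ncmul_one_right)
qed

end

lift_definition scalar :: "complex \<Rightarrow> U" is "\<lambda>c. ncscale c (ncword [])"
  by (rule env_equiv_refl[OF finsupp_ncscale[OF finsupp_ncword]])

lift_definition genU :: "mat3 \<Rightarrow> nat \<Rightarrow> U" is "\<lambda>A r. ncword [(A, r)]"
  by (rule env_equiv_refl[OF finsupp_ncword])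

lift_definition wordU :: "letter list \<Rightarrow> U" is ncword
  by (rule env_equiv_refl[OF finsupp_ncword])

lift_definition ann :: "nat \<times> nat \<Rightarrow> nat \<times> nat \<Rightarrow> U \<Rightarrow> bool" is "\<lambda>lam mu p. p \<in> ann_F lam mu"
proof -
  fix lam mu :: "nat \<times> nat" and p q
  assume "env_equiv p q"
  then have diff: "ncsub p q \<in> ann_F lam mu" "ncscale (-1) (ncsub p q) \<in> ann_F lam mu"
    by (simp_all add: env_equiv_def env_ideal_in_ann_F ann_F_scale)
  have "q = ncadd p (ncscale (-1) (ncsub p q))" "p = ncadd q (ncsub p q)"
    by (simp_all add: fun_eq_iff ncadd_def ncsub_def ncscale_def)
  with diff show "(p \<in> ann_F lam mu) = (q \<in> ann_F lam mu)"
    by (metis ann_F.add)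
qed

abbreviation Xm :: "proot \<Rightarrow> nat \<Rightarrow> U" where "Xm \<alpha> r \<equiv> genU (xminus \<alpha>) r"
abbreviation Xp :: "proot \<Rightarrow> nat \<Rightarrow> U" where "Xp \<alpha> r \<equiv> genU (xplus \<alpha>) r"

lemma scalar_add: "scalar (a + b) = scalar a + scalar b"
  by transfer (intro env_equiv_eqI finsupp_ncscale finsupp_ncword;
      simp add: fun_eq_iff ncadd_def ncscale_def algebra_simps)

lemma scalar_mult: "scalar (a * b) = scalar a * scalar b"
  by transfer (intro env_equiv_eqI finsupp_ncscale finsupp_ncword;
      simp only: ncmul_scale_left ncmul_scale_right ncmul_one_left; simp add: fun_eq_iff ncscale_def)

lemma scalar_one [simp]: "scalar 1 = 1"
  by transfer (intro env_equiv_eqI finsupp_ncscale finsupp_ncword; simp add: fun_eq_iff ncscale_def)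

lemma scalar_zero [simp]: "scalar 0 = 0"
  by transfer (intro env_equiv_eqI finsupp_ncscale finsupp_ncword; simp add: fun_eq_iff ncscale_def)

lemma scalar_uminus: "scalar (- a) = - scalar a"
  using scalar_add[of a "- a"] by (simp add: eq_neg_iff_add_eq_0 add.commute)

lemma scalar_commute: "scalar c * x = x * scalar c"
  by transfer (intro env_equiv_eqI finsupp_ncmul finsupp_ncscale finsupp_ncword;
      simp add: env_equiv_def ncmul_scale_left ncmul_scale_right ncmul_one_left ncmul_one_right)

lemma mult_scalar_left: "x * (scalar c * y) = scalar c * (x * y)"
  by (metis scalar_commute mult.assoc)

lemma scalar_of_nat_Suc: "scalar (of_nat (Suc n)) = scalar (of_nat n) + 1"
  by (simp add: scalar_add add.commute)

lemma uminus_power: "(- x) ^ n = scalar ((-1) ^ n) * x ^ n"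
  by (induction n) (simp_all add: mult_scalar_left scalar_mult scalar_uminus)

lemma ann_zero: "ann lam mu 0"
  by transfer (rule ann_F.zero)

lemma ann_add: "ann lam mu x \<Longrightarrow> ann lam mu y \<Longrightarrow> ann lam mu (x + y)"
  by transfer (rule ann_F.add)

lemma ann_mult_left: "ann lam mu x \<Longrightarrow> ann lam mu (y * x)"
  by transfer (auto simp: env_equiv_def intro: ann_F.lmul)

lemma ann_uminus: "ann lam mu x \<Longrightarrow> ann lam mu (- x)"
  using ann_mult_left[of lam mu x "- 1"] by simp

lemma ann_diff: "ann lam mu x \<Longrightarrow> ann lam mu y \<Longrightarrow> ann lam mu (x - y)"
  using ann_add[OF _ ann_uminus] by (metis diff_conv_add_uminus)

lemma ann_scalar_cancel:
  assumes "c \<noteq> 0" "ann lam mu (scalar c * x)"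
  shows "ann lam mu x"
proof -
  have "scalar (1 / c) * (scalar c * x) = x"
    using assms(1) by (simp add: mult.assoc[symmetric] scalar_mult[symmetric])
  with ann_mult_left[OF assms(2), of "scalar (1 / c)"] show ?thesis by simp
qed

lemma genU_bracket: "genU A r * genU B s = genU B s * genU A r + genU (lie_br A B) (r + s)"
proof transfer
  fix A B r s
  have "ncsub (ncmul (ncword [(A, r)]) (ncword [(B, s)]))
      (ncadd (ncmul (ncword [(B, s)]) (ncword [(A, r)])) (ncword [(lie_br A B, r + s)]))
    = ncsub (ncsub (ncword [(A, r), (B, s)]) (ncword [(B, s), (A, r)])) (ncword [(lie_br A B, r + s)])"
    by (simp add: ncword_Cons[symmetric] fun_eq_iff ncsub_def ncadd_def)
  then show "env_equiv (ncmul (ncword [(A, r)]) (ncword [(B, s)]))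
      (ncadd (ncmul (ncword [(B, s)]) (ncword [(A, r)])) (ncword [(lie_br A B, r + s)]))"
    unfolding env_equiv_def
    by (auto intro!: finsupp_ncmul finsupp_ncword finsupp_ncadd env_rels_in_env_ideal env_rels.bracket)
qed

lemma genU_scaleR: "genU (c *\<^sub>R A) r = scalar (complex_of_real c) * genU A r"
proof transfer
  fix c A r
  show "env_equiv (ncword [(c *\<^sub>R A, r)]) (ncmul (ncscale (complex_of_real c) (ncword [])) (ncword [(A, r)]))"
    unfolding env_equiv_def ncmul_scale_left ncmul_one_left
    using env_rels_in_env_ideal[OF env_rels.lin_scale[of c A r]]
    by (auto intro!: finsupp_ncword finsupp_ncscale)
qed

lemma genU_zero [simp]: "genU 0 r = 0"
  using genU_scaleR[of 0 0 r] by simp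

lemma genU_uminus: "genU (- A) r = - genU A r"
  using genU_scaleR[of "-1" A r] by (simp add: scalar_uminus)

lemma genU_commute: "lie_br A B = 0 \<Longrightarrow> genU A r * genU B s = genU B s * genU A r"
  using genU_bracket[of A r B s] by simp

lemma wordU_Nil: "wordU [] = 1"
  by transfer (rule env_equiv_refl[OF finsupp_ncword])

lemma wordU_Cons: "wordU ((A, r) # w) = genU A r * wordU w"
  by transfer (rule env_equiv_eqI[OF finsupp_ncword ncword_Cons])

lemma wordU_append: "wordU (u @ w) = wordU u * wordU w"
  by (induction u) (auto simp: wordU_Nil wordU_Cons mult.assoc)

lemma wordU_replicate: "wordU (replicate n (A, r)) = genU A r ^ n"
  by (induction n) (simp_all add: wordU_Nil wordU_Cons)

lemma ann_wordU: "ncword w \<in> ann_F lam mu \<Longrightarrow> ann lam mu (wordU w)"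
  by transfer simp

lemma ann_genU: "ncword [(A, r)] \<in> ann_F lam mu \<Longrightarrow> ann lam mu (genU A r)"
  using ann_wordU[of "[(A, r)]"] by (simp add: wordU_Cons wordU_Nil)

lemma ann_Xp: "ann lam mu (Xp \<alpha> r)"
  by (rule ann_genU[OF ann_F.gen[OF F_rels.nplus]])

lemma ann_Xm_high: "2 \<le> r \<Longrightarrow> ann lam mu (Xm \<alpha> r)"
  by (rule ann_genU[OF ann_F.gen[OF F_rels.high]])

lemma ann_Xm0_power: "ann lam mu (Xm \<alpha> 0 ^ (wt_on lam \<alpha> + wt_on mu \<alpha> + 1))"
  using ann_wordU[OF ann_F.gen[OF F_rels.pow0]] by (simp only: wordU_replicate)

lemma ann_Xm1_power: "ann lam mu (Xm \<alpha> 1 ^ (min (wt_on lam \<alpha>) (wt_on mu \<alpha>) + 1))"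
  using ann_wordU[OF ann_F.gen[OF F_rels.pow1]] by (simp only: wordU_replicate)

lemma ann_h1: "1 \<le> r \<Longrightarrow> ann lam mu (genU h1 r)"
  using ann_F.gen[OF F_rels.cartan1[of r lam mu]]
  by (intro ann_genU) (simp add: ncsub_def ncscale_def)

lemma ann_h2: "1 \<le> r \<Longrightarrow> ann lam mu (genU h2 r)"
  using ann_F.gen[OF F_rels.cartan2[of r lam mu]]
  by (intro ann_genU) (simp add: ncsub_def ncscale_def)

section \<open>Commutation relations of the Chevalley generators\<close>

lemmas sl3_matrix_simps = xminus.simps xplus.simps
  lie_br_def Emat_def matrix_matrix_mult_def vec_eq_iff forall_3 sum_3 h1_def h2_def

lemma Xm_self_commute: "Xm \<alpha> r * Xm \<alpha> s = Xm \<alpha> s * Xm \<alpha> r"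
  by (rule genU_commute) (simp add: lie_br_def)

lemma Xm11_commute: "Xm R11 r * Xm \<alpha> s = Xm \<alpha> s * Xm R11 r"
  by (rule genU_commute) (cases \<alpha>; simp add: sl3_matrix_simps)

lemma Xm10_Xm11_commute: "Xm R10 r * Xm R11 s = Xm R11 s * Xm R10 r"
  using Xm11_commute[of s R10 r] by simp

lemma genU_bracket_eqI: "lie_br A B = C \<Longrightarrow> genU A r * genU B s = genU B s * genU A r + genU C (r + s)"
  using genU_bracket[of A r B s] by simp

lemma Xm10_Xm01: "Xm R10 r * Xm R01 s = Xm R01 s * Xm R10 r - Xm R11 (r + s)"
proof -
  have "lie_br (xminus R10) (xminus R01) = - xminus R11"
    by (simp add: sl3_matrix_simps)
  from genU_bracket_eqI[OF this] show ?thesis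
    by (simp add: genU_uminus)
qed

lemma Xm01_Xm10: "Xm R01 r * Xm R10 s = Xm R10 s * Xm R01 r + Xm R11 (r + s)"
  by (rule genU_bracket_eqI) (simp add: sl3_matrix_simps)

lemma Xp10_Xm10: "Xp R10 r * Xm R10 s = Xm R10 s * Xp R10 r + genU h1 (r + s)"
  by (rule genU_bracket_eqI) (simp add: sl3_matrix_simps)

lemma Xp01_Xm01: "Xp R01 r * Xm R01 s = Xm R01 s * Xp R01 r + genU h2 (r + s)"
  by (rule genU_bracket_eqI) (simp add: sl3_matrix_simps)

lemma h1_Xm10: "genU h1 r * Xm R10 s = Xm R10 s * genU h1 r - scalar 2 * Xm R10 (r + s)"
proof -
  have "lie_br h1 (xminus R10) = (-2) *\<^sub>R xminus R10"
    by (simp add: sl3_matrix_simps scaleR_conv_of_real)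
  from genU_bracket_eqI[OF this] show ?thesis
    by (simp add: genU_uminus genU_scaleR)
qed

lemma h2_Xm01: "genU h2 r * Xm R01 s = Xm R01 s * genU h2 r - scalar 2 * Xm R01 (r + s)"
proof -
  have "lie_br h2 (xminus R01) = (-2) *\<^sub>R xminus R01"
    by (simp add: sl3_matrix_simps scaleR_conv_of_real)
  from genU_bracket_eqI[OF this] show ?thesis
    by (simp add: genU_uminus genU_scaleR)
qed

lemma Xp10_Xm11: "Xp R10 r * Xm R11 s = Xm R11 s * Xp R10 r - Xm R01 (r + s)"
proof -
  have "lie_br (xplus R10) (xminus R11) = - xminus R01"
    by (simp add: sl3_matrix_simps)
  from genU_bracket_eqI[OF this] show ?thesis
    by (simp add: genU_uminus)
qed

lemma Xp01_Xm11: "Xp R01 r * Xm R11 s = Xm R11 s * Xp R01 r + Xm R10 (r + s)"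
  by (rule genU_bracket_eqI) (simp add: sl3_matrix_simps)

lemma Xp10_Xm01: "Xp R10 r * Xm R01 s = Xm R01 s * Xp R10 r"
  by (rule genU_commute) (simp add: sl3_matrix_simps)

lemma Xp01_Xm10: "Xp R01 r * Xm R10 s = Xm R10 s * Xp R01 r"
  by (rule genU_commute) (simp add: sl3_matrix_simps)

section \<open>Normal ordering in \<open>U\<close>\<close>

lemma mult_power_commute:
  fixes x y :: "'a::monoid_mult"
  assumes "x * y = y * x"
  shows "x * y ^ n = y ^ n * x"
  using power_commuting_commutes[OF assms[symmetric]] by simp

lemma power_mult_power_commute:
  fixes x y :: "'a::monoid_mult"
  assumes "x * y = y * x"
  shows "x ^ m * y ^ n = y ^ n * x ^ m"
  using power_commuting_commutes[OF mult_power_commute[OF assms]] by simp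

lemma mult_power_commutator:
  assumes "A * B = B * A + C" "C * B = B * C"
  shows "A * B ^ k = B ^ k * A + scalar (of_nat k) * B ^ (k - 1) * C"
proof (induction k)
  case 0
  then show ?case by simp
next
  case (Suc k)
  have "A * B ^ Suc k = (B * A + C) * B ^ k"
    by (simp add: mult.assoc[symmetric] assms(1) power_commutes)
  also have "\<dots> = B * (A * B ^ k) + B ^ k * C"
    by (simp add: distrib_right mult.assoc mult_power_commute[OF assms(2)])
  also have "\<dots> = B ^ Suc k * A + (B * (scalar (of_nat k) * B ^ (k - 1)) + B ^ k) * C"
    by (simp add: Suc distrib_left distrib_right mult.assoc)
  also have "B * (scalar (of_nat k) * B ^ (k - 1)) + B ^ k = scalar (of_nat (Suc k)) * B ^ k"
    by (cases k) (simp_all add: mult_scalar_left scalar_of_nat_Suc distrib_right distrib_left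
        del: of_nat_Suc)
  finally show ?case by simp
qed

lemma mult_power_commutator2:
  assumes "A * B = B * A + C" "C * B = B * C + D" "D * B = B * D"
  shows "A * B ^ k = B ^ k * A + scalar (of_nat k) * B ^ (k - 1) * C
      + scalar (of_nat k * (of_nat k - 1) / 2) * B ^ (k - 2) * D"
proof (induction k)
  case 0
  then show ?case by simp
next
  case (Suc k)
  have "A * B ^ Suc k = B * (A * B ^ k) + C * B ^ k"
    by (simp add: mult.assoc[symmetric] assms(1) distrib_right power_commutes)
  also have "\<dots> = B ^ Suc k * A + (B * (scalar (of_nat k) * B ^ (k - 1)) + B ^ k) * C
      + (B * (scalar (of_nat k * (of_nat k - 1) / 2) * B ^ (k - 2)) + scalar (of_nat k) * B ^ (k - 1)) * D"
    by (simp add: Suc mult_power_commutator[OF assms(2,3)] distrib_left distrib_right mult.assoc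
        add_ac)
  also have "B * (scalar (of_nat k) * B ^ (k - 1)) + B ^ k = scalar (of_nat (Suc k)) * B ^ k"
    by (cases k) (simp_all add: mult_scalar_left scalar_of_nat_Suc distrib_right distrib_left
        del: of_nat_Suc)
  also have "B * (scalar (of_nat k * (of_nat k - 1) / 2) * B ^ (k - 2)) + scalar (of_nat k) * B ^ (k - 1)
      = scalar (of_nat (Suc k) * (of_nat (Suc k) - 1) / 2) * B ^ (Suc k - 2)"
  proof (cases "k < 2")
    case True
    then consider "k = 0" | "k = 1" by linarith
    then show ?thesis by cases simp_all
  next
    case False
    then have "Suc k - 2 = Suc (k - 2)" "k - 1 = Suc k - 2"
      by simp_all
    then have "B * B ^ (k - 2) = B ^ (Suc k - 2)" "B ^ (k - 1) = B ^ (Suc k - 2)"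
      by (simp_all only: power_Suc)
    moreover have "of_nat k * (of_nat k - 1) / 2 + of_nat k
        = (of_nat (Suc k) * (of_nat (Suc k) - 1) / 2 :: complex)"
      by (simp add: field_simps)
    ultimately show ?thesis
      by (simp only: mult_scalar_left distrib_right[symmetric] scalar_add[symmetric])
  qed
  finally show ?case by simp
qed

lemma power_mult_commutator:
  assumes "A * B = B * A + C" "C * A = A * C"
  shows "A ^ k * B = B * A ^ k + scalar (of_nat k) * A ^ (k - 1) * C"
proof (induction k)
  case 0
  then show ?case by simp
next
  case (Suc k)
  have "A ^ Suc k * B = A * (A ^ k * B)"
    by (simp add: mult.assoc)
  also have "\<dots> = (B * A + C) * A ^ k + A * (scalar (of_nat k) * A ^ (k - 1) * C)"
    by (simp add: Suc distrib_left mult.assoc[symmetric] assms(1))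
  also have "\<dots> = B * A ^ Suc k + (A ^ k + scalar (of_nat k) * (A * A ^ (k - 1))) * C"
    by (simp add: distrib_right distrib_left mult.assoc mult_power_commute[OF assms(2)]
        power_commutes mult_scalar_left)
  also have "A ^ k + scalar (of_nat k) * (A * A ^ (k - 1)) = scalar (of_nat (Suc k)) * A ^ k"
    by (cases k) (simp_all add: scalar_of_nat_Suc distrib_right add.commute del: of_nat_Suc)
  finally show ?case by (simp add: mult.assoc)
qed

lemma power_mult_power_commutator:
  fixes A B C :: U
  assumes "A * B = B * A + C" "C * A = A * C" "C * B = B * C"
  obtains S where "A ^ n * B ^ m = B ^ m * A ^ n + S * C"
proof -
  have "\<exists>S. A ^ n * B ^ m = B ^ m * A ^ n + S * C"
  proof (induction n)
    case 0
    have "A ^ 0 * B ^ m = B ^ m * A ^ 0 + 0 * C" by simp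
    then show ?case by blast
  next
    case (Suc n)
    then obtain S where S: "A ^ n * B ^ m = B ^ m * A ^ n + S * C" by blast
    have "A ^ Suc n * B ^ m = (A * B ^ m) * A ^ n + A * S * C"
      by (simp add: S distrib_left mult.assoc)
    also have "\<dots> = B ^ m * A ^ Suc n + (scalar (of_nat m) * B ^ (m - 1) * A ^ n + A * S) * C"
      by (simp add: mult_power_commutator[OF assms(1,3)] distrib_right mult.assoc
          mult_power_commute[OF assms(2)] power_commutes)
    finally show ?case by blast
  qed
  then show ?thesis using that by blast
qed

lemma ann_mult_power:
  assumes "A * B = B * A + C" "ann lam mu A" "\<And>j. ann lam mu (C * B ^ j)"
  shows "ann lam mu (A * B ^ m)"
proof (induction m)
  case 0
  then show ?case using assms by simp
next
  case (Suc m)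
  have "A * B ^ Suc m = B * (A * B ^ m) + C * B ^ m"
    by (simp add: mult.assoc[symmetric] assms(1) distrib_right power_commutes)
  then show ?case using Suc assms(3) by (simp add: ann_add ann_mult_left)
qed

definition falling_fact :: "nat \<Rightarrow> nat \<Rightarrow> complex" where
  "falling_fact m j = (\<Prod>i<j. of_nat (m - i))"

lemma falling_fact_0 [simp]: "falling_fact m 0 = 1"
  by (simp add: falling_fact_def)

lemma falling_fact_Suc: "falling_fact m (Suc j) = falling_fact m j * of_nat (m - j)"
  by (simp add: falling_fact_def)

lemma falling_fact_nonzero: "j \<le> m \<Longrightarrow> falling_fact m j \<noteq> 0"
  by (simp add: falling_fact_def)

text \<open>If \<open>A C\<^sup>i X v = 0\<close> for all \<open>i\<close>, each application of \<open>A\<close> to \<open>B\<^sup>m X v\<close> turns one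
  \<open>B\<close> into \<open>C = [A, B]\<close>.\<close>

lemma ann_raise_power:
  assumes "A * B = B * A + C" "C * B = B * C"
    and X: "\<And>i. ann lam mu (A * C ^ i * X)"
    and "j \<le> m"
  shows "ann lam mu (A ^ j * B ^ m * X - scalar (falling_fact m j) * B ^ (m - j) * C ^ j * X)"
  using \<open>j \<le> m\<close>
proof (induction j)
  case 0
  then show ?case by (simp add: ann_zero)
next
  case (Suc j)
  then have IH: "ann lam mu (A ^ j * B ^ m * X - scalar (falling_fact m j) * B ^ (m - j) * C ^ j * X)"
    by simp
  let ?c = "scalar (falling_fact m j) * B ^ (m - j)"
  have "A * (?c * C ^ j * X)
      = ?c * (A * C ^ j * X) + scalar (falling_fact m (Suc j)) * B ^ (m - Suc j) * C ^ Suc j * X"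
  proof -
    have "A * (?c * C ^ j * X) = scalar (falling_fact m j) * ((A * B ^ (m - j)) * (C ^ j * X))"
      by (simp add: mult.assoc mult_scalar_left)
    also have "\<dots> = ?c * (A * C ^ j * X)
        + (scalar (falling_fact m j) * scalar (of_nat (m - j))) * B ^ (m - j - 1) * (C * C ^ j * X)"
      by (simp only: mult_power_commutator[OF assms(1,2)] distrib_right distrib_left mult.assoc)
    finally show ?thesis
      by (simp add: falling_fact_Suc scalar_mult mult.assoc)
  qed
  then have "A ^ Suc j * B ^ m * X - scalar (falling_fact m (Suc j)) * B ^ (m - Suc j) * C ^ Suc j * X
      = A * (A ^ j * B ^ m * X - ?c * C ^ j * X) + ?c * (A * C ^ j * X)"
    by (simp add: right_diff_distrib mult.assoc)
  moreover have "ann lam mu (?c * (A * C ^ j * X))"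
    by (rule ann_mult_left[OF X])
  ultimately show ?case
    using ann_add[OF ann_mult_left[OF IH]] by simp
qed

lemma ann_mult_power_ge:
  assumes "ann lam mu (x ^ k)" "k \<le> n"
  shows "ann lam mu (y * x ^ n)"
proof -
  have "y * x ^ n = (y * x ^ (n - k)) * x ^ k"
    using assms(2) by (simp add: mult.assoc power_add[symmetric])
  then show ?thesis
    using ann_mult_left[OF assms(1)] by simp
qed

section \<open>The \<open>sl\<^sub>2\<close> loop relation\<close>

locale sl2_loop =
  fixes E F H :: "nat \<Rightarrow> U" and lam mu :: "nat \<times> nat" and N :: nat
  assumes E_F: "E r * F s = F s * E r + H (r + s)"
    and H_F: "H r * F s = F s * H r - scalar 2 * F (r + s)"
    and F_F: "F r * F s = F s * F r"
    and ann_E: "ann lam mu (E r)"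
    and ann_H: "1 \<le> r \<Longrightarrow> ann lam mu (H r)"
    and ann_F_high: "2 \<le> r \<Longrightarrow> ann lam mu (F r)"
    and ann_F0_power: "ann lam mu (F 0 ^ (N + 1))"
begin

lemma ann_H_F1_power:
  assumes "1 \<le> r"
  shows "ann lam mu (H r * F 1 ^ s)"
proof (rule ann_mult_power)
  show "H r * F 1 = F 1 * H r + (- scalar 2 * F (r + 1))"
    using H_F[of r 1] by simp
  show "ann lam mu (H r)"
    using ann_H[OF assms] .
  have eq: "(- scalar 2 * F (r + 1)) * F 1 ^ j = (- scalar 2 * F 1 ^ j) * F (r + 1)" for j
    by (simp add: mult.assoc mult_power_commute[OF F_F])
  show "ann lam mu ((- scalar 2 * F (r + 1)) * F 1 ^ j)" for j
    unfolding eq by (rule ann_mult_left, rule ann_F_high) (use assms in simp)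
qed

lemma ann_E_F1_power: "ann lam mu (E r * F 1 ^ s)"
  using ann_mult_power[OF E_F ann_E] ann_H_F1_power[of "r + 1"] by simp

text \<open>Pushing \<open>E 1\<close> through \<open>F 0\<^sup>k\<^sup>+\<^sup>2\<close> leaves \<open>H 1\<close>-terms, which die on \<open>F 1\<^sup>s v\<close>, and
  \<open>[H 1, F 0] = -2 F 1\<close>, which raises the \<open>F 1\<close>-degree.\<close>

lemma ann_E1_F0_power:
  "ann lam mu (E 1 * (F 0 ^ (k + 2) * F 1 ^ s)
      + scalar (of_nat ((k + 2) * (k + 1))) * (F 0 ^ k * F 1 ^ Suc s))"
proof -
  let ?D = "- scalar 2 * F 1"
  have E_F0: "E 1 * F 0 = F 0 * E 1 + H 1"
    using E_F[of 1 0] by simp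
  have H_F0: "H 1 * F 0 = F 0 * H 1 + ?D"
    using H_F[of 1 0] by simp
  have D_F0: "?D * F 0 = F 0 * ?D"
    by (simp only: mult_minus_left mult_minus_right mult.assoc F_F[of 1 0] mult_scalar_left)
  have "F 0 ^ k * (?D * F 1 ^ s) = - (scalar 2 * (F 0 ^ k * F 1 ^ Suc s))"
    by (simp add: mult.assoc mult_scalar_left)
  moreover have "of_nat (k + 2) * (of_nat (k + 2) - 1) / 2 * 2 = (of_nat ((k + 2) * (k + 1)) :: complex)"
    by (simp add: field_simps)
  ultimately have coeff: "scalar (of_nat (k + 2) * (of_nat (k + 2) - 1) / 2) * (F 0 ^ k * (?D * F 1 ^ s))
      = - (scalar (of_nat ((k + 2) * (k + 1))) * (F 0 ^ k * F 1 ^ Suc s))"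
    by (simp only: mult_minus_right mult.assoc[symmetric] scalar_mult[symmetric])
  have "E 1 * F 0 ^ (k + 2) = F 0 ^ (k + 2) * E 1 + scalar (of_nat (k + 2)) * F 0 ^ (k + 1) * H 1
      + scalar (of_nat (k + 2) * (of_nat (k + 2) - 1) / 2) * F 0 ^ k * ?D"
    using mult_power_commutator2[OF E_F0 H_F0 D_F0, of "k + 2"] by simp
  then have expand: "E 1 * (F 0 ^ (k + 2) * F 1 ^ s) = F 0 ^ (k + 2) * (E 1 * F 1 ^ s)
      + scalar (of_nat (k + 2)) * F 0 ^ (k + 1) * (H 1 * F 1 ^ s)
      + scalar (of_nat (k + 2) * (of_nat (k + 2) - 1) / 2) * (F 0 ^ k * (?D * F 1 ^ s))"
    by (simp only: mult.assoc[symmetric]) (simp only: distrib_right mult.assoc)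
  then have "E 1 * (F 0 ^ (k + 2) * F 1 ^ s) + scalar (of_nat ((k + 2) * (k + 1))) * (F 0 ^ k * F 1 ^ Suc s)
      = F 0 ^ (k + 2) * (E 1 * F 1 ^ s) + scalar (of_nat (k + 2)) * F 0 ^ (k + 1) * (H 1 * F 1 ^ s)"
    by (simp only: expand coeff) simp
  then show ?thesis
    using ann_add[OF ann_mult_left[OF ann_E_F1_power] ann_mult_left[OF ann_H_F1_power]] by simp
qed

theorem ann_F0_power_F1_power: "N + 1 \<le> p + 2 * s \<Longrightarrow> ann lam mu (F 0 ^ p * F 1 ^ s)"
proof (induction s arbitrary: p)
  case 0
  then show ?case
    using ann_mult_power_ge[OF ann_F0_power, of p 1] by simp
next
  case (Suc s)
  then have "ann lam mu (E 1 * (F 0 ^ (p + 2) * F 1 ^ s))"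
    by (intro ann_mult_left Suc.IH) simp
  from ann_diff[OF ann_E1_F0_power[of p s] this]
  have "ann lam mu (scalar (of_nat ((p + 2) * (p + 1))) * (F 0 ^ p * F 1 ^ Suc s))"
    by (simp only: add_diff_cancel_left')
  then show ?case
    by (rule ann_scalar_cancel[rotated]) (simp only: of_nat_eq_0_iff, simp)
qed

end

section \<open>Spans over \<open>U(n\<^sup>- \<otimes> 1)\<close>\<close>

lemma in_Unminus_ncadd:
  assumes p: "in_Unminus p" and q: "in_Unminus q"
  shows "in_Unminus (ncadd p q)"
  unfolding in_Unminus_def
proof (intro conjI allI impI)
  show "finsupp (ncadd p q)"
    using p q unfolding in_Unminus_def by (simp add: finsupp_ncadd)
  fix w assume "ncadd p q w \<noteq> 0"
  then have "p w \<noteq> 0 \<or> q w \<noteq> 0"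
    by (auto simp: ncadd_def)
  then show "set w \<subseteq> {(xminus R10, 0), (xminus R11, 0), (xminus R01, 0)}"
    using p q unfolding in_Unminus_def by (elim disjE) simp_all
qed

lemma in_Unminus_ncmul:
  assumes p: "in_Unminus p" and q: "in_Unminus q"
  shows "in_Unminus (ncmul p q)"
  unfolding in_Unminus_def
proof (intro conjI allI impI)
  show "finsupp (ncmul p q)"
    using p q unfolding in_Unminus_def by (simp add: finsupp_ncmul)
  fix w assume "ncmul p q w \<noteq> 0"
  then obtain i where "p (take i w) \<noteq> 0" "q (drop i w) \<noteq> 0"
    using ncmul_nonzero_split by blast
  then have "set (take i w) \<union> set (drop i w) \<subseteq> {(xminus R10, 0), (xminus R11, 0), (xminus R01, 0)}"
    using p q unfolding in_Unminus_def by simp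
  then show "set w \<subseteq> {(xminus R10, 0), (xminus R11, 0), (xminus R01, 0)}"
    by (metis append_take_drop_id set_append)
qed

lemma in_Unminus_scalar: "in_Unminus (ncscale c (ncword []))"
  unfolding in_Unminus_def
  by (intro conjI finsupp_ncscale finsupp_ncword) (simp add: ncscale_def ncword_def)

lemma in_Unminus_Xm0: "in_Unminus (ncword [(xminus \<alpha>, 0)])"
  unfolding in_Unminus_def
  by (intro conjI finsupp_ncword) (cases \<alpha>; simp add: ncword_def)

definition U_nminus :: "U set" where
  "U_nminus = abs_U ` {p. in_Unminus p}"

lemma env_equiv_in_Unminus: "in_Unminus p \<Longrightarrow> env_equiv p p"
  by (simp add: in_Unminus_def env_equiv_refl)

lemma U_nminus_add: "x \<in> U_nminus \<Longrightarrow> y \<in> U_nminus \<Longrightarrow> x + y \<in> U_nminus"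
  unfolding U_nminus_def
  by (auto simp: plus_U.abs_eq env_equiv_in_Unminus intro: in_Unminus_ncadd)

lemma U_nminus_mult: "x \<in> U_nminus \<Longrightarrow> y \<in> U_nminus \<Longrightarrow> x * y \<in> U_nminus"
  unfolding U_nminus_def
  by (auto simp: times_U.abs_eq env_equiv_in_Unminus intro: in_Unminus_ncmul)

lemma U_nminus_scalar: "scalar c \<in> U_nminus"
  unfolding U_nminus_def using scalar.abs_eq in_Unminus_scalar by blast

lemma U_nminus_Xm0: "Xm \<alpha> 0 \<in> U_nminus"
  unfolding U_nminus_def using genU.abs_eq in_Unminus_Xm0 by blast

inductive_set nminus_span :: "U set \<Rightarrow> U set" for G where
  zero: "0 \<in> nminus_span G"
| step: "n \<in> U_nminus \<Longrightarrow> g \<in> G \<Longrightarrow> x \<in> nminus_span G \<Longrightarrow> n * g + x \<in> nminus_span G"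

lemma nminus_span_add: "x \<in> nminus_span G \<Longrightarrow> y \<in> nminus_span G \<Longrightarrow> x + y \<in> nminus_span G"
  by (induction rule: nminus_span.induct) (simp_all add: add.assoc nminus_span.step)

lemma nminus_span_gen: "n \<in> U_nminus \<Longrightarrow> g \<in> G \<Longrightarrow> n * g \<in> nminus_span G"
  using nminus_span.step[OF _ _ nminus_span.zero] by simp

lemma nminus_span_mult_left:
  assumes "n \<in> U_nminus" "x \<in> nminus_span G"
  shows "n * x \<in> nminus_span G"
  using assms(2) by (induction rule: nminus_span.induct)
    (simp_all add: assms(1) nminus_span.intros U_nminus_mult distrib_left mult.assoc[symmetric])

lemma nminus_span_mult_right_induct:
  assumes "x \<in> nminus_span G" "0 \<in> Q" "\<And>a b. a \<in> Q \<Longrightarrow> b \<in> Q \<Longrightarrow> a + b \<in> Q"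
    "\<And>n g. n \<in> U_nminus \<Longrightarrow> g \<in> G \<Longrightarrow> n * g * R \<in> Q"
  shows "x * R \<in> Q"
  using assms(1) by (induction rule: nminus_span.induct) (simp_all add: assms(2-4) distrib_right)

lemma monomial_mult_lowering:
  fixes Y Z f :: U
  assumes Yf: "Y * f = f * Y + Z" and Zf: "Z * f = f * Z" and ZY: "Z * Y = Y * Z"
  shows "Z ^ j * Y ^ (n - j) * f
    = f * (Z ^ j * Y ^ (n - j)) + scalar (of_nat (n - j)) * (Z ^ Suc j * Y ^ (n - Suc j))"
proof -
  have "Z ^ j * Y ^ (n - j) * f = Z ^ j * (Y ^ (n - j) * f)"
    by (simp add: mult.assoc)
  also have "\<dots> = (Z ^ j * f) * Y ^ (n - j) + scalar (of_nat (n - j)) * (Z ^ j * (Y ^ (n - j - 1) * Z))"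
    by (simp only: power_mult_commutator[OF Yf ZY] distrib_left mult.assoc mult_scalar_left[of "Z ^ j"])
  also have "Y ^ (n - j - 1) * Z = Z * Y ^ (n - Suc j)"
    using mult_power_commute[OF ZY, of "n - Suc j"] by simp
  also have "Z ^ j * (Z * Y ^ (n - Suc j)) = Z ^ Suc j * Y ^ (n - Suc j)"
    by (simp only: power_Suc2 mult.assoc)
  also have "Z ^ j * f = f * Z ^ j"
    by (rule power_commuting_commutes[OF Zf])
  finally show ?thesis
    by (simp add: mult.assoc)
qed

lemma nminus_span_mult_lowering:
  fixes Y Z f :: U
  assumes Yf: "Y * f = f * Y + Z" and Zf: "Z * f = f * Z" and ZY: "Z * Y = Y * Z"
    and f: "f \<in> U_nminus"
    and "x \<in> nminus_span {Z ^ j * Y ^ (n - j) | j. j < p}"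
  shows "x * f \<in> nminus_span {Z ^ j * Y ^ (n - j) | j. j < Suc p}"
proof (rule nminus_span_mult_right_induct[OF assms(5) nminus_span.zero nminus_span_add])
  fix m g assume m: "m \<in> U_nminus" and "g \<in> {Z ^ j * Y ^ (n - j) | j. j < p}"
  then obtain j where j: "j < p" "g = Z ^ j * Y ^ (n - j)" by blast
  have "m * g * f = (m * f) * g + (m * scalar (of_nat (n - j))) * (Z ^ Suc j * Y ^ (n - Suc j))"
    unfolding j(2) mult.assoc[of m] monomial_mult_lowering[OF Yf Zf ZY]
    by (simp add: distrib_left mult.assoc)
  moreover have "(m * f) * g \<in> nminus_span {Z ^ j * Y ^ (n - j) | j. j < Suc p}"
    using j m f by (intro nminus_span_gen U_nminus_mult) auto
  moreover have "(m * scalar (of_nat (n - j))) * (Z ^ Suc j * Y ^ (n - Suc j))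
      \<in> nminus_span {Z ^ j * Y ^ (n - j) | j. j < Suc p}"
    using j m by (intro nminus_span_gen U_nminus_mult U_nminus_scalar) (auto simp del: power_Suc)
  ultimately show "m * g * f \<in> nminus_span {Z ^ j * Y ^ (n - j) | j. j < Suc p}"
    by (simp add: nminus_span_add)
qed

lemma power_mult_power_lowering:
  fixes Y Z f :: U
  assumes Yf: "Y * f = f * Y + Z" and Zf: "Z * f = f * Z" and ZY: "Z * Y = Y * Z"
    and f: "f \<in> U_nminus"
  shows "Y ^ n * f ^ p - scalar (falling_fact n p) * (Z ^ p * Y ^ (n - p))
    \<in> nminus_span {Z ^ j * Y ^ (n - j) | j. j < p}"
proof (induction p)
  case 0
  then show ?case by (simp add: nminus_span.zero)
next
  case (Suc p)
  let ?r = "Y ^ n * f ^ p - scalar (falling_fact n p) * (Z ^ p * Y ^ (n - p))"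
  have "scalar (falling_fact n p) * (Z ^ p * Y ^ (n - p)) * f
      = (scalar (falling_fact n p) * f) * (Z ^ p * Y ^ (n - p))
        + (scalar (falling_fact n p) * scalar (of_nat (n - p))) * (Z ^ Suc p * Y ^ (n - Suc p))"
    by (simp only: mult.assoc[of "scalar (falling_fact n p)"] monomial_mult_lowering[OF Yf Zf ZY]
        distrib_left)
  also have "scalar (falling_fact n p) * scalar (of_nat (n - p)) = scalar (falling_fact n (Suc p))"
    by (simp add: scalar_mult[symmetric] falling_fact_Suc)
  finally have top: "scalar (falling_fact n p) * (Z ^ p * Y ^ (n - p)) * f
      = (scalar (falling_fact n p) * f) * (Z ^ p * Y ^ (n - p))
        + scalar (falling_fact n (Suc p)) * (Z ^ Suc p * Y ^ (n - Suc p))" .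
  have "?r * f = Y ^ n * f ^ Suc p - scalar (falling_fact n p) * (Z ^ p * Y ^ (n - p)) * f"
    by (simp only: left_diff_distrib power_Suc2 mult.assoc)
  then have "Y ^ n * f ^ Suc p - scalar (falling_fact n (Suc p)) * (Z ^ Suc p * Y ^ (n - Suc p))
      = ?r * f + (scalar (falling_fact n p) * f) * (Z ^ p * Y ^ (n - p))"
    by (simp only: top) (simp add: algebra_simps)
  moreover have "?r * f \<in> nminus_span {Z ^ j * Y ^ (n - j) | j. j < Suc p}"
    by (rule nminus_span_mult_lowering[OF Yf Zf ZY f Suc.IH])
  moreover have "(scalar (falling_fact n p) * f) * (Z ^ p * Y ^ (n - p))
      \<in> nminus_span {Z ^ j * Y ^ (n - j) | j. j < Suc p}"
    by (intro nminus_span_gen U_nminus_mult U_nminus_scalar f) blast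
  ultimately show ?case
    by (simp add: nminus_span_add)
qed

section \<open>Straightening modulo the annihilator\<close>

fun monomial :: "nat \<times> nat \<times> nat \<Rightarrow> U" where
  "monomial (a, b, c) = Xm R10 1 ^ a * Xm R11 1 ^ b * Xm R01 1 ^ c"

fun X_U :: "nat \<times> nat \<times> nat \<Rightarrow> U" where
  "X_U (a, b, c) = scalar (1 / of_nat (fact a * fact b * fact c)) * monomial (a, b, c)"

lemma env_equiv_Xs: "env_equiv (Xs s) (Xs s)"
  by (cases s) (auto simp: Xs_def intro!: env_equiv_refl finsupp_ncscale finsupp_ncword)

lemma abs_U_Xs: "abs_U (Xs s) = X_U s"
proof -
  obtain a b c where s: "s = (a, b, c)" by (cases s)
  define w :: "letter list" where "w = replicate a (xminus R10, 1) @ replicate b (xminus R11, 1) @ replicate c (xminus R01, 1)"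
  define k :: complex where "k = 1 / of_nat (fact a * fact b * fact c)"
  have "Xs s = ncmul (ncscale k (ncword [])) (ncword w)"
    by (simp add: Xs_def s w_def k_def ncmul_scale_left ncmul_one_left)
  then have "abs_U (Xs s) = scalar k * wordU w"
    by (simp add: times_U.abs_eq[symmetric] scalar.abs_eq wordU.abs_eq env_equiv_refl finsupp_ncscale
        finsupp_ncword)
  also have "wordU w = monomial (a, b, c)"
    by (simp add: w_def wordU_append wordU_replicate mult.assoc)
  finally show ?thesis
    by (simp add: s k_def)
qed

definition lower :: "nat \<times> nat \<times> nat \<Rightarrow> U set" where
  "lower s = nminus_span (X_U ` {t. succ_ord s t})"

definition lower_mod :: "nat \<times> nat \<Rightarrow> nat \<times> nat \<Rightarrow> nat \<times> nat \<times> nat \<Rightarrow> U set" where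
  "lower_mod lam mu s = {x. \<exists>l \<in> lower s. ann lam mu (x - l)}"

lemma lower_mod_ann: "ann lam mu x \<Longrightarrow> x \<in> lower_mod lam mu s"
  unfolding lower_mod_def lower_def using nminus_span.zero by force

lemma lower_mod_add:
  assumes "x \<in> lower_mod lam mu s" "y \<in> lower_mod lam mu s"
  shows "x + y \<in> lower_mod lam mu s"
proof -
  obtain l l' where l: "l \<in> lower s" "ann lam mu (x - l)" "l' \<in> lower s" "ann lam mu (y - l')"
    using assms unfolding lower_mod_def by blast
  have "x + y - (l + l') = (x - l) + (y - l')"
    by (simp add: algebra_simps)
  then have "ann lam mu (x + y - (l + l'))"
    using ann_add[OF l(2,4)] by (simp only:)
  moreover have "l + l' \<in> lower s"
    using l(1,3) unfolding lower_def by (rule nminus_span_add)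
  ultimately show ?thesis
    unfolding lower_mod_def by blast
qed

lemma lower_mod_mult_left:
  assumes "n \<in> U_nminus" "x \<in> lower_mod lam mu s"
  shows "n * x \<in> lower_mod lam mu s"
proof -
  obtain l where l: "l \<in> lower s" "ann lam mu (x - l)"
    using assms(2) unfolding lower_mod_def by blast
  have "n * x - n * l = n * (x - l)"
    by (simp add: algebra_simps)
  then have "ann lam mu (n * x - n * l)"
    using ann_mult_left[OF l(2)] by (simp only:)
  moreover have "n * l \<in> lower s"
    using nminus_span_mult_left[OF assms(1)] l(1) unfolding lower_def by blast
  ultimately show ?thesis
    unfolding lower_mod_def by blast
qed

lemma lower_mod_ann_diff:
  assumes "ann lam mu (x - y)" "y \<in> lower_mod lam mu s"
  shows "x \<in> lower_mod lam mu s"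
proof -
  have "x = (x - y) + y" by simp
  then show ?thesis
    using lower_mod_add[OF lower_mod_ann[OF assms(1)] assms(2)] by simp
qed

lemma lower_mod_monomial:
  assumes "succ_ord s t" "n \<in> U_nminus"
  shows "n * monomial t \<in> lower_mod lam mu s"
proof -
  obtain a b c where t: "t = (a, b, c)" by (cases t)
  define k :: complex where "k = of_nat (fact a * fact b * fact c)"
  have "(n * scalar k) * X_U t = n * ((scalar k * scalar (1 / k)) * monomial t)"
    unfolding t X_U.simps k_def[symmetric] by (simp only: mult.assoc)
  also have "scalar k * scalar (1 / k) = 1"
    by (simp add: k_def scalar_mult[symmetric])
  finally have "n * monomial t - (n * scalar k) * X_U t = 0"
    by simp
  then have "ann lam mu (n * monomial t - (n * scalar k) * X_U t)"
    using ann_zero by (simp only:)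
  moreover have "(n * scalar k) * X_U t \<in> lower s"
    unfolding lower_def using assms by (intro nminus_span_gen U_nminus_mult U_nminus_scalar) auto
  ultimately show ?thesis
    unfolding lower_mod_def by blast
qed

lemma X_U_in_lower_mod:
  assumes "ann lam mu (scalar k * monomial s + l)" "l \<in> lower_mod lam mu s" "k \<noteq> 0"
  shows "X_U s \<in> lower_mod lam mu s"
proof -
  obtain a b c where s: "s = (a, b, c)" by (cases s)
  define K :: complex where "K = of_nat (fact a * fact b * fact c)"
  have "- l \<in> lower_mod lam mu s"
    using lower_mod_mult_left[OF U_nminus_scalar assms(2), of "- 1"] by (simp add: scalar_uminus)
  moreover have "scalar k * monomial s - - l = scalar k * monomial s + l"
    by simp
  ultimately have "scalar k * monomial s \<in> lower_mod lam mu s"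
    using assms(1) lower_mod_ann_diff by metis
  then have "scalar (1 / (k * K)) * (scalar k * monomial s) \<in> lower_mod lam mu s"
    by (rule lower_mod_mult_left[OF U_nminus_scalar])
  moreover have "scalar (1 / (k * K)) * (scalar k * monomial s) = scalar (1 / (k * K) * k) * monomial s"
    by (simp only: scalar_mult mult.assoc)
  moreover have "1 / (k * K) * k = 1 / K"
    using assms(3) by simp
  ultimately show ?thesis
    unfolding s X_U.simps K_def by simp
qed

lemma X_U_in_lower_mod_if_ann: "ann lam mu (monomial s) \<Longrightarrow> X_U s \<in> lower_mod lam mu s"
  using X_U_in_lower_mod[of lam mu 1 s 0] by (simp add: lower_mod_ann ann_zero)

lemma sum_insert_update_coeff:
  fixes c :: "'a \<Rightarrow> 'b::semiring_0"
  assumes "finite T" "\<forall>t. t \<notin> T \<longrightarrow> c t = 0"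
  shows "(\<Sum>t\<in>insert t' T. (c(t' := n + c t')) t * X t) = n * X t' + (\<Sum>t\<in>T. c t * X t)"
proof -
  have old: "(\<Sum>t\<in>insert t' T. c t * X t) = (\<Sum>t\<in>T. c t * X t)"
    using assms by (cases "t' \<in> T") (simp_all add: insert_absorb)
  have "(\<Sum>t\<in>insert t' T. (c(t' := n + c t')) t * X t)
      = (\<Sum>t\<in>insert t' T. c t * X t + (if t = t' then n * X t' else 0))"
    by (intro sum.cong) (auto simp: distrib_right add.commute)
  also have "\<dots> = n * X t' + (\<Sum>t\<in>T. c t * X t)"
    using assms(1) by (simp add: sum.distrib old add.commute)
  finally show ?thesis .
qed

lemma lower_sum:
  assumes "x \<in> lower s"
  obtains T c where "finite T" "\<forall>t\<in>T. succ_ord s t \<and> c t \<in> U_nminus"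
    "x = (\<Sum>t\<in>T. c t * X_U t)"
proof -
  have "\<exists>T c. finite T \<and> (\<forall>t\<in>T. succ_ord s t \<and> c t \<in> U_nminus) \<and> (\<forall>t. t \<notin> T \<longrightarrow> c t = 0)
      \<and> x = (\<Sum>t\<in>T. c t * X_U t)"
    using assms unfolding lower_def
  proof (induction rule: nminus_span.induct)
    case zero
    show ?case by (intro exI[of _ "{}"] exI[of _ "\<lambda>_. 0"]) simp
  next
    case (step n g x)
    then obtain T c where T: "finite T" "\<forall>t\<in>T. succ_ord s t \<and> c t \<in> U_nminus"
      "\<forall>t. t \<notin> T \<longrightarrow> c t = 0" "x = (\<Sum>t\<in>T. c t * X_U t)"
      by blast
    from step obtain t' where t': "g = X_U t'" "succ_ord s t'" by blast
    have "c t' \<in> U_nminus"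
      using T(2) U_nminus_scalar[of 0] by (cases "t' \<in> T") (simp_all add: T(3)[rule_format])
    then have "\<forall>t\<in>insert t' T. succ_ord s t \<and> (c(t' := n + c t')) t \<in> U_nminus"
      using T(2) t'(2) step(1) by (auto simp: U_nminus_add)
    moreover have "(\<Sum>t\<in>insert t' T. (c(t' := n + c t')) t * X_U t) = n * g + x"
      using sum_insert_update_coeff[OF T(1,3)] t'(1) T(4) by simp
    ultimately show ?case
      using T(1,3) by (intro exI[of _ "insert t' T"] exI[of _ "c(t' := n + c t')"]) simp
  qed
  then show ?thesis
    using that by blast
qed

lemma lower_sum_representatives:
  assumes "x \<in> lower s"
  obtains T c where "finite T" "\<forall>t\<in>T. succ_ord s t \<and> in_Unminus (c t)"
    "x = (\<Sum>t\<in>T. abs_U (c t) * X_U t)"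
proof -
  obtain T cU where T: "finite T" "\<forall>t\<in>T. succ_ord s t \<and> cU t \<in> U_nminus"
    "x = (\<Sum>t\<in>T. cU t * X_U t)"
    using assms by (rule lower_sum)
  have "\<forall>t\<in>T. \<exists>p. in_Unminus p \<and> cU t = abs_U p"
    using T(2) unfolding U_nminus_def by blast
  then obtain c where c: "\<forall>t\<in>T. in_Unminus (c t) \<and> cU t = abs_U (c t)"
    by (rule bchoice[elim_format]) blast
  have "x = (\<Sum>t\<in>T. abs_U (c t) * X_U t)"
    unfolding T(3) using c by (intro sum.cong) simp_all
  with T(1,2) c show ?thesis
    using that by blast
qed

lemma lower_uminus: "x \<in> lower s \<Longrightarrow> - x \<in> lower s"
  using nminus_span_mult_left[OF U_nminus_scalar, of x _ "- 1"] by (simp add: lower_def scalar_uminus)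

lemma abs_U_Xs_sum:
  assumes "finite T" "\<forall>t\<in>T. finsupp (c t)"
  shows "env_equiv (\<lambda>w. \<Sum>t\<in>T. ncmul (c t) (Xs t) w) (\<lambda>w. \<Sum>t\<in>T. ncmul (c t) (Xs t) w)
    \<and> abs_U (\<lambda>w. \<Sum>t\<in>T. ncmul (c t) (Xs t) w) = (\<Sum>t\<in>T. abs_U (c t) * X_U t)"
  using assms
proof (induction T rule: finite_induct)
  case empty
  then show ?case
    using zero_U.abs_eq by (simp add: env_equiv_refl finsupp_zero)
next
  case (insert t T)
  let ?S = "\<lambda>w. \<Sum>t\<in>T. ncmul (c t) (Xs t) w"
  have split: "(\<lambda>w. \<Sum>t\<in>insert t T. ncmul (c t) (Xs t) w) = ncadd (ncmul (c t) (Xs t)) ?S"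
    using insert(1,2) by (simp add: ncadd_def)
  have ct: "env_equiv (c t) (c t)"
    using insert(4) by (simp add: env_equiv_refl)
  have prod: "env_equiv (ncmul (c t) (Xs t)) (ncmul (c t) (Xs t))"
    using insert(4) env_equiv_Xs[of t] by (intro env_equiv_refl finsupp_ncmul) (auto simp: env_equiv_def)
  have S: "env_equiv ?S ?S" "abs_U ?S = (\<Sum>t\<in>T. abs_U (c t) * X_U t)"
    using insert by auto
  have "env_equiv (ncadd (ncmul (c t) (Xs t)) ?S) (ncadd (ncmul (c t) (Xs t)) ?S)"
    using prod S(1) by (intro env_equiv_refl finsupp_ncadd) (auto simp: env_equiv_def)
  moreover have "abs_U (ncadd (ncmul (c t) (Xs t)) ?S) = abs_U (c t) * X_U t + abs_U ?S"
    by (simp only: plus_U.abs_eq[OF prod S(1), symmetric] times_U.abs_eq[OF ct env_equiv_Xs, symmetric]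
        abs_U_Xs)
  ultimately show ?case
    unfolding split using insert(1,2) S(2) by simp
qed

lemma Xs_reduction_if_lower_mod:
  assumes "X_U s \<in> lower_mod lam mu s"
  shows "\<exists>T :: (nat \<times> nat \<times> nat) set. \<exists>c :: nat \<times> nat \<times> nat \<Rightarrow> ncpoly.
           finite T \<and> (\<forall>s'\<in>T. succ_ord s s' \<and> in_Unminus (c s')) \<and>
           (\<lambda>w. Xs s w + (\<Sum>s'\<in>T. ncmul (c s') (Xs s') w)) \<in> ann_F lam mu"
proof -
  obtain l where l: "l \<in> lower s" "ann lam mu (X_U s - l)"
    using assms unfolding lower_mod_def by blast
  obtain T c where T: "finite T" "\<forall>t\<in>T. succ_ord s t \<and> in_Unminus (c t)"
    "- l = (\<Sum>t\<in>T. abs_U (c t) * X_U t)"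
    using lower_uminus[OF l(1)] by (rule lower_sum_representatives)
  let ?S = "\<lambda>w. \<Sum>t\<in>T. ncmul (c t) (Xs t) w"
  have "\<forall>t\<in>T. finsupp (c t)"
    using T(2) by (simp add: in_Unminus_def)
  from abs_U_Xs_sum[OF T(1) this] T(3)
  have S: "env_equiv ?S ?S" "abs_U ?S = - l"
    by auto
  have equiv: "env_equiv (ncadd (Xs s) ?S) (ncadd (Xs s) ?S)"
    using env_equiv_Xs[of s] S(1) by (intro env_equiv_refl finsupp_ncadd) (auto simp: env_equiv_def)
  have "abs_U (ncadd (Xs s) ?S) = X_U s - l"
    by (simp add: plus_U.abs_eq[OF env_equiv_Xs S(1), symmetric] abs_U_Xs S(2))
  with l(2) have "ncadd (Xs s) ?S \<in> ann_F lam mu"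
    using ann.abs_eq[OF equiv] by simp
  then have "(\<lambda>w. Xs s w + ?S w) \<in> ann_F lam mu"
    by (simp add: ncadd_def)
  with T(1,2) show ?thesis
    by (intro exI[of _ T] exI[of _ c]) simp
qed

section \<open>The five violated inequalities\<close>

interpretation sl2_R10: sl2_loop "Xp R10" "Xm R10" "genU h1" lam mu "wt_on lam R10 + wt_on mu R10"
  for lam mu
  by unfold_locales
    (assumption | rule Xp10_Xm10 h1_Xm10 Xm_self_commute ann_Xp ann_h1 ann_Xm_high ann_Xm0_power)+

interpretation sl2_R01: sl2_loop "Xp R01" "Xm R01" "genU h2" lam mu "wt_on lam R01 + wt_on mu R01"
  for lam mu
  by unfold_locales
    (assumption | rule Xp01_Xm01 h2_Xm01 Xm_self_commute ann_Xp ann_h2 ann_Xm_high ann_Xm0_power)+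

lemma X_U_lower_mod_case_a:
  assumes "min m1 n1 < a"
  shows "X_U (a, b, c) \<in> lower_mod (m1, m2) (n1, n2) (a, b, c)"
proof (rule X_U_in_lower_mod_if_ann)
  let ?W = "- Xm R11 2"
  have ann_W: "ann (m1, m2) (n1, n2) ?W"
    by (intro ann_uminus ann_Xm_high) simp
  have "Xm R10 1 * Xm R01 1 = Xm R01 1 * Xm R10 1 + ?W"
    using Xm10_Xm01[of 1 1] by (simp only: one_add_one diff_conv_add_uminus)
  moreover have "?W * Xm R10 1 = Xm R10 1 * ?W" "?W * Xm R01 1 = Xm R01 1 * ?W"
    by (simp_all add: Xm11_commute)
  ultimately obtain S where S: "Xm R10 1 ^ a * Xm R01 1 ^ c = Xm R01 1 ^ c * Xm R10 1 ^ a + S * ?W"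
    by (rule power_mult_power_commutator)
  have "monomial (a, b, c) = Xm R11 1 ^ b * (Xm R10 1 ^ a * Xm R01 1 ^ c)"
    by (simp add: power_mult_power_commute[OF Xm10_Xm11_commute] mult.assoc[symmetric])
  also have "\<dots> = (Xm R11 1 ^ b * Xm R01 1 ^ c) * Xm R10 1 ^ a + (Xm R11 1 ^ b * S) * ?W"
    by (simp only: S distrib_left mult.assoc)
  finally show "ann (m1, m2) (n1, n2) (monomial (a, b, c))"
    using ann_add[OF ann_mult_power_ge[OF ann_Xm1_power[of "(m1, m2)" "(n1, n2)" R10], of a]
        ann_mult_left[OF ann_W]] assms
    by simp
qed

lemma X_U_lower_mod_case_c:
  assumes "min m2 n2 < c"
  shows "X_U (a, b, c) \<in> lower_mod (m1, m2) (n1, n2) (a, b, c)"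
  using ann_mult_power_ge[OF ann_Xm1_power[of "(m1, m2)" "(n1, n2)" R01], of c] assms
  by (intro X_U_in_lower_mod_if_ann) simp

lemma ann_Xm11_power_Xm01_power:
  assumes "min (m1 + m2) (n1 + n2) < a + b + c"
  shows "ann (m1, m2) (n1, n2) (Xm R11 1 ^ (a + b) * Xm R01 1 ^ c)"
proof -
  let ?lam = "(m1, m2)" and ?mu = "(n1, n2)" and ?P = "Xp R10 0" and ?Y = "- Xm R01 1"
  have PZ: "?P * Xm R11 1 = Xm R11 1 * ?P + ?Y"
    using Xp10_Xm11[of 0 1] by simp
  have PY: "?P * ?Y = ?Y * ?P"
    using Xp10_Xm01[of 0 1] by simp
  have YZ: "?Y * Xm R11 1 = Xm R11 1 * ?Y"
    using Xm11_commute[of 1 R01 1] by simp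
  have "ann ?lam ?mu (?P * ?Y ^ i * 1)" for i
    using ann_mult_left[OF ann_Xp[of ?lam ?mu R10 0], of "?Y ^ i"]
    by (simp only: mult_power_commute[OF PY] mult_1_right)
  from ann_raise_power[OF PZ YZ this, of c "a + b + c"]
  have "ann ?lam ?mu (?P ^ c * Xm R11 1 ^ (a + b + c)
      - scalar (falling_fact (a + b + c) c) * Xm R11 1 ^ (a + b) * ?Y ^ c)"
    by simp
  moreover have "ann ?lam ?mu (?P ^ c * Xm R11 1 ^ (a + b + c))"
    using ann_mult_power_ge[OF ann_Xm1_power[of ?lam ?mu R11]] assms by simp
  ultimately have "ann ?lam ?mu (scalar (falling_fact (a + b + c) c) * Xm R11 1 ^ (a + b) * ?Y ^ c)"
    using ann_diff by fastforce
  then have "ann ?lam ?mu (scalar (falling_fact (a + b + c) c * (-1) ^ c) * (Xm R11 1 ^ (a + b) * Xm R01 1 ^ c))"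
    by (simp only: uminus_power mult.assoc mult_scalar_left[of "Xm R11 1 ^ (a + b)"])
      (simp only: mult.assoc[symmetric] scalar_mult)
  then show ?thesis
    by (rule ann_scalar_cancel[rotated]) (simp add: falling_fact_nonzero)
qed

lemma X_U_lower_mod_case_abc:
  assumes "min (m1 + m2) (n1 + n2) < a + b + c"
  shows "X_U (a, b, c) \<in> lower_mod (m1, m2) (n1, n2) (a, b, c)"
proof (rule X_U_in_lower_mod_if_ann)
  let ?lam = "(m1, m2)" and ?mu = "(n1, n2)" and ?Q = "Xp R01 0"
  have QZ: "?Q * Xm R11 1 = Xm R11 1 * ?Q + Xm R10 1"
    using Xp01_Xm11[of 0 1] by simp
  have QG: "?Q * Xm R10 1 = Xm R10 1 * ?Q"
    using Xp01_Xm10[of 0 1] by simp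
  have "ann ?lam ?mu (?Q * Xm R10 1 ^ i * Xm R01 1 ^ c)" for i
    using ann_mult_left[OF sl2_R01.ann_E_F1_power[of ?lam ?mu 0 c], of "Xm R10 1 ^ i"]
    by (simp only: mult_power_commute[OF QG] mult.assoc)
  from ann_raise_power[OF QZ Xm10_Xm11_commute this, of a "a + b"]
  have "ann ?lam ?mu (?Q ^ a * Xm R11 1 ^ (a + b) * Xm R01 1 ^ c
      - scalar (falling_fact (a + b) a) * Xm R11 1 ^ b * Xm R10 1 ^ a * Xm R01 1 ^ c)"
    by simp
  moreover have "ann ?lam ?mu (?Q ^ a * Xm R11 1 ^ (a + b) * Xm R01 1 ^ c)"
    using ann_mult_left[OF ann_Xm11_power_Xm01_power[OF assms]] by (simp add: mult.assoc)
  ultimately have "ann ?lam ?mu (scalar (falling_fact (a + b) a) * (Xm R11 1 ^ b * Xm R10 1 ^ a * Xm R01 1 ^ c))"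
    using ann_diff by (fastforce simp: mult.assoc)
  then have "ann ?lam ?mu (Xm R11 1 ^ b * Xm R10 1 ^ a * Xm R01 1 ^ c)"
    by (rule ann_scalar_cancel[rotated]) (simp add: falling_fact_nonzero)
  then show "ann ?lam ?mu (monomial (a, b, c))"
    by (simp add: power_mult_power_commute[OF Xm10_Xm11_commute])
qed

lemma ann_monomial_reorder:
  "ann lam mu (Xm R11 1 ^ j * Xm R01 1 ^ k * Xm R10 1 ^ a - monomial (a, j, k))"
proof -
  have "Xm R01 1 * Xm R10 1 = Xm R10 1 * Xm R01 1 + Xm R11 2"
    using Xm01_Xm10[of 1 1] by (simp only: one_add_one)
  moreover have "Xm R11 2 * Xm R01 1 = Xm R01 1 * Xm R11 2" "Xm R11 2 * Xm R10 1 = Xm R10 1 * Xm R11 2"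
    by (rule Xm11_commute)+
  ultimately obtain S where S: "Xm R01 1 ^ k * Xm R10 1 ^ a = Xm R10 1 ^ a * Xm R01 1 ^ k + S * Xm R11 2"
    by (rule power_mult_power_commutator)
  have "Xm R11 1 ^ j * Xm R01 1 ^ k * Xm R10 1 ^ a
      = Xm R11 1 ^ j * (Xm R10 1 ^ a * Xm R01 1 ^ k) + (Xm R11 1 ^ j * S) * Xm R11 2"
    by (simp only: mult.assoc S distrib_left)
  moreover have "Xm R11 1 ^ j * (Xm R10 1 ^ a * Xm R01 1 ^ k) = monomial (a, j, k)"
    by (simp add: power_mult_power_commute[OF Xm10_Xm11_commute] mult.assoc)
  ultimately show ?thesis
    using ann_mult_left[OF ann_Xm_high[of 2]] by simp
qed

lemma X_U_lower_mod_case_2ab: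
  assumes "m1 + n1 < 2 * a + b"
  shows "X_U (a, b, c) \<in> lower_mod (m1, m2) (n1, n2) (a, b, c)"
proof -
  let ?lam = "(m1, m2)" and ?mu = "(n1, n2)" and ?f = "Xm R10 0"
  let ?G = "Xm R10 1" and ?Z = "Xm R11 1" and ?Y = "Xm R01 1"
  define n where "n = b + c"
  define \<sigma> where "\<sigma> = ?Y ^ n * ?f ^ b - scalar (falling_fact n b) * (?Z ^ b * ?Y ^ (n - b))"
  have "?Y * ?f = ?f * ?Y + ?Z"
    using Xm01_Xm10[of 1 0] by simp
  then have "\<sigma> \<in> nminus_span {?Z ^ j * ?Y ^ (n - j) | j. j < b}"
    unfolding \<sigma>_def by (rule power_mult_power_lowering[OF _ Xm11_commute Xm11_commute U_nminus_Xm0])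
  then have lower_part: "\<sigma> * ?G ^ a \<in> lower_mod ?lam ?mu (a, b, c)"
  proof (rule nminus_span_mult_right_induct[OF _ lower_mod_ann[OF ann_zero] lower_mod_add])
    fix m g assume m: "m \<in> U_nminus" and "g \<in> {?Z ^ j * ?Y ^ (n - j) | j. j < b}"
    then obtain j where j: "j < b" "g = ?Z ^ j * ?Y ^ (n - j)" by blast
    have "m * monomial (a, j, n - j) \<in> lower_mod ?lam ?mu (a, b, c)"
      using j(1) by (intro lower_mod_monomial[OF _ m]) (simp add: succ_ord_def n_def)
    moreover have "ann ?lam ?mu (m * g * ?G ^ a - m * monomial (a, j, n - j))"
      using ann_mult_left[OF ann_monomial_reorder, of _ _ m] by (simp add: j(2) mult.assoc right_diff_distrib)
    ultimately show "m * g * ?G ^ a \<in> lower_mod ?lam ?mu (a, b, c)"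
      by (rule lower_mod_ann_diff[rotated])
  qed
  define l where "l = scalar (falling_fact n b) * (?Z ^ b * ?Y ^ c * ?G ^ a - monomial (a, b, c)) + \<sigma> * ?G ^ a"
  have "ann ?lam ?mu (l - \<sigma> * ?G ^ a)"
    using ann_mult_left[OF ann_monomial_reorder] by (simp add: l_def)
  then have "l \<in> lower_mod ?lam ?mu (a, b, c)"
    using lower_part by (rule lower_mod_ann_diff)
  moreover have "ann ?lam ?mu (?f ^ b * ?G ^ a)"
    using sl2_R10.ann_F0_power_F1_power[of ?lam ?mu b a] assms by simp
  then have "ann ?lam ?mu (?Y ^ n * (?f ^ b * ?G ^ a))"
    by (rule ann_mult_left)
  moreover have "?Y ^ n * (?f ^ b * ?G ^ a) = scalar (falling_fact n b) * monomial (a, b, c) + l"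
    by (simp add: l_def \<sigma>_def n_def algebra_simps)
  ultimately show ?thesis
    using falling_fact_nonzero[of b n] by (intro X_U_in_lower_mod[of _ _ "falling_fact n b"]) (simp_all add: n_def)
qed

lemma uminus_Xm11_power_reorder:
  "(- Xm R11 1) ^ j * (Xm R10 1 ^ k * Xm R01 1 ^ c) = scalar ((-1) ^ j) * monomial (k, j, c)"
  by (simp add: uminus_power power_mult_power_commute[OF Xm10_Xm11_commute] mult.assoc)

lemma X_U_lower_mod_case_2cb:
  assumes "m2 + n2 < 2 * c + b"
  shows "X_U (a, b, c) \<in> lower_mod (m1, m2) (n1, n2) (a, b, c)"
proof -
  let ?lam = "(m1, m2)" and ?mu = "(n1, n2)" and ?f = "Xm R01 0"
  let ?G = "Xm R10 1" and ?Z = "- Xm R11 1" and ?Y = "Xm R01 1"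
  define n where "n = a + b"
  define \<sigma> where "\<sigma> = ?G ^ n * ?f ^ b - scalar (falling_fact n b) * (?Z ^ b * ?G ^ (n - b))"
  have "?G * ?f = ?f * ?G + ?Z"
    using Xm10_Xm01[of 1 0] by simp
  moreover have "?Z * ?f = ?f * ?Z" "?Z * ?G = ?G * ?Z"
    using Xm11_commute[of 1 R01 0] Xm11_commute[of 1 R10 1] by simp_all
  ultimately have "\<sigma> \<in> nminus_span {?Z ^ j * ?G ^ (n - j) | j. j < b}"
    unfolding \<sigma>_def by (rule power_mult_power_lowering[OF _ _ _ U_nminus_Xm0])
  have lower_part: "\<sigma> * ?Y ^ c \<in> lower_mod ?lam ?mu (a, b, c)"
  proof (rule nminus_span_mult_right_induct[OF \<open>\<sigma> \<in> _\<close> lower_mod_ann[OF ann_zero] lower_mod_add])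
    fix m g assume m: "m \<in> U_nminus" and "g \<in> {?Z ^ j * ?G ^ (n - j) | j. j < b}"
    then obtain j where j: "j < b" "g = ?Z ^ j * ?G ^ (n - j)" by blast
    have "(m * scalar ((-1) ^ j)) * monomial (n - j, j, c) \<in> lower_mod ?lam ?mu (a, b, c)"
      using j(1) by (intro lower_mod_monomial U_nminus_mult[OF m U_nminus_scalar])
        (simp add: succ_ord_def n_def)
    then show "m * g * ?Y ^ c \<in> lower_mod ?lam ?mu (a, b, c)"
      by (simp only: j(2) mult.assoc uminus_Xm11_power_reorder)
  qed
  have "scalar (falling_fact n b) * (?Z ^ b * ?G ^ (n - b)) * ?Y ^ c
      = scalar (falling_fact n b) * (scalar ((-1) ^ b) * monomial (a, b, c))"
    by (simp only: mult.assoc uminus_Xm11_power_reorder n_def add_diff_cancel_right')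
  also have "\<dots> = scalar (falling_fact n b * (-1) ^ b) * monomial (a, b, c)"
    by (simp only: mult.assoc scalar_mult)
  finally have "?G ^ n * (?f ^ b * ?Y ^ c) = \<sigma> * ?Y ^ c + scalar (falling_fact n b * (-1) ^ b) * monomial (a, b, c)"
    by (simp add: \<sigma>_def algebra_simps)
  moreover have "ann ?lam ?mu (?f ^ b * ?Y ^ c)"
    using sl2_R01.ann_F0_power_F1_power[of ?lam ?mu b c] assms by simp
  then have "ann ?lam ?mu (?G ^ n * (?f ^ b * ?Y ^ c))"
    by (rule ann_mult_left)
  ultimately show ?thesis
    using falling_fact_nonzero[of b n] lower_part
    by (intro X_U_in_lower_mod[of _ _ "falling_fact n b * (-1) ^ b" _ "\<sigma> * ?Y ^ c"])
      (simp_all add: n_def add.commute)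
qed

theorem proposition4p1:
  fixes lam mu :: "nat \<times> nat" and s :: "nat \<times> nat \<times> nat"
  assumes "s \<notin> S_A lam mu"
  shows "\<exists>T :: (nat \<times> nat \<times> nat) set. \<exists>c :: nat \<times> nat \<times> nat \<Rightarrow> ncpoly.
           finite T \<and> (\<forall>s'\<in>T. succ_ord s s' \<and> in_Unminus (c s')) \<and>
           (\<lambda>w. Xs s w + (\<Sum>s'\<in>T. ncmul (c s') (Xs s') w)) \<in> ann_F lam mu"
proof (rule Xs_reduction_if_lower_mod)
  obtain m1 m2 n1 n2 a b c where params: "lam = (m1, m2)" "mu = (n1, n2)" "s = (a, b, c)"
    by (metis prod.exhaust)
  with assms consider "min m1 n1 < a" | "min m2 n2 < c" | "min (m1 + m2) (n1 + n2) < a + b + c"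
    | "m1 + n1 < 2 * a + b" | "m2 + n2 < 2 * c + b"
    unfolding S_A_def by fastforce
  then show "X_U s \<in> lower_mod lam mu s"
    unfolding params
    by cases (fact X_U_lower_mod_case_a X_U_lower_mod_case_c X_U_lower_mod_case_abc
        X_U_lower_mod_case_2ab X_U_lower_mod_case_2cb)+
qed
end
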